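(* Let $E$ be a Banach space, $\Omega$ a compact Hausdorff space with Borel $\sigma$-field $\Sigma$, let $H$ be a (V)-subset of $M(\Omega,E^* )\cong C(\Omega,E)^*$, and let $(A_m)_{m\in H}$ be a family of sets in $\Sigma$. Then $\{m\chi_{A_m} : m\in H\}$ is a (V)-subset of $M(\Omega,E^* )$.
   Context: $M(\Omega,E^* )$ denotes the Banach space of weak*-regular $E^*$-valued measures of bounded variation on $\Sigma$, normed by $\|m\|=|m|(\Omega)$, identified isometrically with $C(\Omega,E)^*$ via $\langle f,m\rangle=\int f\,dm$. For $m\in M(\Omega,E^* )$ and $A\in\Sigma$, $m\chi_A$ is the measure $B\mapsto m(A\cap B)$. A series $\sum_n x_n$ in a Banach space $X$ is weakly unconditionally Cauchy (WUC) if $\sum_n|x^*(x_n)|<\infty$ for every $x^*\in X^*$. A subset $H\subset X^*$ is a (V)-subset if $\lim_{n\to\infty}\sup_{x^*\in H}|x^*(x_n)|=0$ for every WUC series $\sum_n x_n$ in $X$ (here $X=C(\Omega,E)$). *)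

theory Defs
  imports "HOL-Analysis.Analysis"
begin

definition borel_parts :: "'w::topological_space set \<Rightarrow> 'w set set set" where
  "borel_parts A = {P. finite P \<and> P \<subseteq> sets borel \<and> disjoint P \<and> \<Union>P = A}"

definition variation :: "('w::topological_space set \<Rightarrow> 'b::real_normed_vector) \<Rightarrow> 'w set \<Rightarrow> ereal" where
  "variation \<nu> A = (SUP P \<in> borel_parts A. ereal (\<Sum>B\<in>P. norm (\<nu> B)))"

definition regular_signed_borel :: "('w::topological_space set \<Rightarrow> real) \<Rightarrow> bool" where
  "regular_signed_borel \<mu> \<longleftrightarrow>
     (\<forall>A::nat \<Rightarrow> 'w set. range A \<subseteq> sets borel \<longrightarrow> disjoint_family A \<longrightarrow>
         (\<lambda>n. \<mu> (A n)) sums \<mu> (\<Union>n. A n)) \<and>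
     variation \<mu> UNIV < \<infinity> \<and>
     (\<forall>A\<in>sets borel. \<forall>\<epsilon>>0. \<exists>K U. compact K \<and> open U \<and> K \<subseteq> A \<and> A \<subseteq> U \<and>
         variation \<mu> (U - K) < ereal \<epsilon>)"

text \<open>M(Omega, E*): weak*-regular E*-valued Borel measures of bounded variation.
  A measure is a function on sets, normalised to 0 outside the Borel sets.\<close>
definition Mspace :: "('w::topological_space set \<Rightarrow> ('e::real_normed_vector \<Rightarrow>\<^sub>L real)) set" where
  "Mspace = {m. (\<forall>B. B \<notin> sets borel \<longrightarrow> m B = 0) \<and>
                variation m UNIV < \<infinity> \<and>
                (\<forall>x. regular_signed_borel (\<lambda>B. blinfun_apply (m B) x))}"

text \<open>The duality pairing <f, m> = integral of f dm, for f in C(Omega,E), as the limit of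
  Riemann sums over Borel partitions on whose pieces f oscillates less than delta.\<close>
definition pairing :: "('w::topological_space \<Rightarrow>\<^sub>C 'e::real_normed_vector) \<Rightarrow> ('w set \<Rightarrow> ('e \<Rightarrow>\<^sub>L real)) \<Rightarrow> real" where
  "pairing f m = (THE c. \<forall>\<epsilon>>0. \<exists>\<delta>>0. \<forall>P t. P \<in> borel_parts UNIV \<longrightarrow>
       (\<forall>B\<in>P. \<forall>u\<in>B. \<forall>v\<in>B. dist (f u) (f v) < \<delta>) \<longrightarrow>
       (\<forall>B\<in>P. B \<noteq> {} \<longrightarrow> t B \<in> B) \<longrightarrow>
       \<bar>c - (\<Sum>B\<in>P. blinfun_apply (m B) (f (t B)))\<bar> \<le> \<epsilon>)"

definition restr_meas :: "('w::topological_space set \<Rightarrow> 'b::zero) \<Rightarrow> 'w set \<Rightarrow> ('w set \<Rightarrow> 'b)" where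
  "restr_meas m A = (\<lambda>B. if B \<in> sets borel then m (A \<inter> B) else 0)"

definition WUC :: "(nat \<Rightarrow> 'a::real_normed_vector) \<Rightarrow> bool" where
  "WUC x \<longleftrightarrow> (\<forall>\<phi> :: 'a \<Rightarrow>\<^sub>L real. summable (\<lambda>n. \<bar>blinfun_apply \<phi> (x n)\<bar>))"

definition V_subset :: "('w::topological_space set \<Rightarrow> ('e::real_normed_vector \<Rightarrow>\<^sub>L real)) set \<Rightarrow> bool" where
  "V_subset H \<longleftrightarrow> H \<subseteq> Mspace \<and>
     (\<forall>f :: nat \<Rightarrow> ('w \<Rightarrow>\<^sub>C 'e). WUC f \<longrightarrow>
        (\<forall>\<epsilon>>0. \<exists>N. \<forall>n\<ge>N. \<forall>m\<in>H. \<bar>pairing (f n) m\<bar> \<le> \<epsilon>))"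

end

theory Submission
  imports Defs
begin

text \<open>
  Fix a WUC series \<open>(f\<^sub>n)\<close> in \<open>C(\<Omega>,E)\<close>. For \<open>m \<in> H\<close>, regularity of the scalar measures
  \<open>\<langle>m(\<cdot>), x\<rangle>\<close>, with \<open>x\<close> ranging over a finite net of the range of \<open>f\<^sub>n\<close>, gives a compact
  \<open>K \<subseteq> A\<^sub>m\<close> and an open \<open>U \<supseteq> A\<^sub>m\<close> such that \<open>U - K\<close> is negligible for the Riemann sums of
  \<open>f\<^sub>n\<close>; an Urysohn function \<open>\<phi>\<^sub>n : \<Omega> \<rightarrow> [0,1]\<close> equal to \<open>1\<close> on \<open>K\<close> and \<open>0\<close> off \<open>U\<close> then
  makes \<open>\<langle>f\<^sub>n, m\<chi>\<^bsub>A\<^sub>m\<^esub>\<rangle>\<close> close to \<open>\<langle>\<phi>\<^sub>n f\<^sub>n, m\<rangle>\<close>.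

  Multiplying the terms of a WUC series by functions with values in \<open>[0,1]\<close> gives again a WUC
  series: by Baire's theorem the signed sums \<open>\<Sum> s\<^sub>n f\<^sub>n\<close> (\<open>|s\<^sub>n| \<le> 1\<close>) satisfy
  \<open>|\<psi>(\<Sum> s\<^sub>n f\<^sub>n)| \<le> C \<parallel>\<psi>\<parallel>\<close>, and this bound survives replacing the terms one at a time by
  \<open>\<phi>\<^sub>n f\<^sub>n\<close>, because \<open>\<parallel>\<psi> \<circ> M\<^sub>\<phi>\<parallel> + \<parallel>\<psi> \<circ> M\<^bsub>1-\<phi>\<^esub>\<parallel> \<le> \<parallel>\<psi>\<parallel>\<close> for the multiplication operators.
  Choosing for each \<open>n\<close> a measure \<open>m\<^sub>n \<in> H\<close> that violates the estimate for \<open>f\<^sub>n\<close>, the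
  (V)-property of \<open>H\<close> applied to \<open>(\<phi>\<^sub>n f\<^sub>n)\<close> yields the (V)-property of the restrictions.
\<close>

lemma regular_signed_borel_sums:
  assumes "regular_signed_borel \<mu>" "range A \<subseteq> sets borel" "disjoint_family A"
  shows "(\<lambda>n. \<mu> (A n)) sums \<mu> (\<Union>n. A n)"
  using assms by (simp add: regular_signed_borel_def)

lemma regular_signed_borel_compact_open:
  assumes "regular_signed_borel \<mu>" "A \<in> sets borel" "0 < \<epsilon>"
  obtains K U where "compact K" "open U" "K \<subseteq> A" "A \<subseteq> U" "variation \<mu> (U - K) < ereal \<epsilon>"
proof -
  have "\<forall>A\<in>sets borel. \<forall>\<epsilon>>0. \<exists>K U. compact K \<and> open U \<and> K \<subseteq> A \<and> A \<subseteq> U \<and>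
      variation \<mu> (U - K) < ereal \<epsilon>"
    using assms(1) unfolding regular_signed_borel_def by (rule conjunct2[OF conjunct2])
  then show ?thesis
    using assms(2,3) that by blast
qed

lemma regular_signed_borel_empty:
  assumes "regular_signed_borel \<mu>"
  shows "\<mu> {} = 0"
proof -
  have "(\<lambda>n. \<mu> {}) sums \<mu> {}"
    using regular_signed_borel_sums[OF assms, of "\<lambda>_. {}"] by (simp add: disjoint_family_on_def)
  then have "(\<lambda>n. \<mu> {}) \<longlonglongrightarrow> 0"
    using summable_LIMSEQ_zero sums_summable by blast
  then show ?thesis
    using LIMSEQ_const_iff by blast
qed

lemma regular_signed_borel_Un:
  assumes \<mu>: "regular_signed_borel \<mu>"
    and "S \<in> sets borel" "T \<in> sets borel" "S \<inter> T = {}"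
  shows "\<mu> (S \<union> T) = \<mu> S + \<mu> T"
proof -
  have "range (binaryset S T) \<subseteq> sets borel" "disjoint_family (binaryset S T)"
    using assms(2-4) by (auto simp: binaryset_def disjoint_family_on_def)
  then have "(\<lambda>n. \<mu> (binaryset S T n)) sums \<mu> (S \<union> T)"
    using regular_signed_borel_sums[OF \<mu>] UN_binaryset_eq by metis
  moreover have "(\<lambda>n. \<mu> (binaryset S T n)) sums (\<mu> S + \<mu> T)"
    by (rule binaryset_sums) (rule regular_signed_borel_empty[OF \<mu>])
  ultimately show ?thesis
    by (rule sums_unique2)
qed

lemma Mspace_regular: "m \<in> Mspace \<Longrightarrow> regular_signed_borel (\<lambda>B. blinfun_apply (m B) x)"
  by (simp add: Mspace_def)

lemma Mspace_variation_finite: "m \<in> Mspace \<Longrightarrow> variation m UNIV < \<infinity>"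
  by (simp add: Mspace_def)

lemma Mspace_empty: "m \<in> Mspace \<Longrightarrow> m {} = 0"
  by (rule blinfun_eqI) (simp add: regular_signed_borel_empty[OF Mspace_regular])

lemma Mspace_Un:
  assumes "m \<in> Mspace" "S \<in> sets borel" "T \<in> sets borel" "S \<inter> T = {}"
  shows "m (S \<union> T) = m S + m T"
  by (rule blinfun_eqI)
    (simp add: regular_signed_borel_Un[OF Mspace_regular[OF assms(1)] assms(2-4)] blinfun.add_left)

lemma Mspace_Union:
  assumes "m \<in> Mspace" "finite P" "P \<subseteq> sets borel" "disjoint P"
  shows "m (\<Union>P) = (\<Sum>B\<in>P. m B)"
  using assms(2-4)
proof (induction P rule: finite_induct)
  case empty
  then show ?case using Mspace_empty[OF assms(1)] by simp
next
  case (insert C P)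
  have "C \<inter> \<Union>P = {}"
    using insert.prems(2) insert.hyps(2) by (auto simp: pairwise_insert disjnt_def)
  moreover have "\<Union>P \<in> sets borel"
    using insert by (intro sets.finite_Union) auto
  ultimately have "m (C \<union> \<Union>P) = m C + m (\<Union>P)"
    using insert.prems by (intro Mspace_Un[OF assms(1)]) auto
  then show ?case
    using insert by (simp add: pairwise_insert)
qed

lemma sum_norm_le_variation:
  fixes \<nu> :: "'w::topological_space set \<Rightarrow> 'b::real_normed_vector"
  assumes "finite Q" "Q \<subseteq> sets borel" "disjoint Q" "\<Union>Q \<subseteq> S" "S \<in> sets borel"
  shows "ereal (\<Sum>B\<in>Q. norm (\<nu> B)) \<le> variation \<nu> S"
proof -
  define Q' where "Q' = insert (S - \<Union>Q) Q"
  have "Q' \<in> borel_parts S"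
    using assms unfolding borel_parts_def Q'_def
    by (auto simp: pairwise_insert disjnt_def intro!: sets.Diff sets.finite_Union)
  have "(\<Sum>B\<in>Q. norm (\<nu> B)) \<le> (\<Sum>B\<in>Q'. norm (\<nu> B))"
    by (rule sum_mono2) (use assms in \<open>auto simp: Q'_def\<close>)
  then have "ereal (\<Sum>B\<in>Q. norm (\<nu> B)) \<le> ereal (\<Sum>B\<in>Q'. norm (\<nu> B))"
    by simp
  also have "\<dots> \<le> variation \<nu> S"
    unfolding variation_def using \<open>Q' \<in> borel_parts S\<close> by (rule SUP_upper)
  finally show ?thesis .
qed

lemma variation_mono:
  assumes "S \<subseteq> T" "T \<in> sets borel"
  shows "variation \<nu> S \<le> variation \<nu> T"
  unfolding variation_def[of \<nu> S]
proof (rule SUP_least)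
  fix P assume "P \<in> borel_parts S"
  then show "ereal (\<Sum>B\<in>P. norm (\<nu> B)) \<le> variation \<nu> T"
    using assms by (intro sum_norm_le_variation) (auto simp: borel_parts_def)
qed

lemma variation_restr_meas_le:
  fixes \<nu> :: "'w::topological_space set \<Rightarrow> 'b::real_normed_vector"
  assumes "\<nu> {} = 0" "A \<in> sets borel" "S \<in> sets borel"
  shows "variation (restr_meas \<nu> A) S \<le> variation \<nu> S"
  unfolding variation_def[of "restr_meas \<nu> A"]
proof (rule SUP_least)
  fix P assume "P \<in> borel_parts S"
  then have P: "finite P" "P \<subseteq> sets borel" "disjoint P" "\<Union>P = S"
    by (auto simp: borel_parts_def)
  have "(\<Sum>B\<in>P. norm (restr_meas \<nu> A B)) = (\<Sum>B\<in>P. norm (\<nu> (A \<inter> B)))"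
    using P(2) by (intro sum.cong) (auto simp: restr_meas_def)
  also have "\<dots> = (\<Sum>D\<in>(\<inter>) A ` P. norm (\<nu> D))"
  proof (rule sum.reindex_nontrivial[symmetric, unfolded o_def])
    fix x y assume "x \<in> P" "y \<in> P" "x \<noteq> y" "A \<inter> x = A \<inter> y"
    then have "A \<inter> x = {}"
      using P(3) unfolding pairwise_def disjnt_def by blast
    then show "norm (\<nu> (A \<inter> x)) = 0"
      using assms(1) by simp
  qed (fact P(1))
  finally have "(\<Sum>B\<in>P. norm (restr_meas \<nu> A B)) = (\<Sum>D\<in>(\<inter>) A ` P. norm (\<nu> D))" .
  moreover have "ereal (\<Sum>D\<in>(\<inter>) A ` P. norm (\<nu> D)) \<le> variation \<nu> S"
    using P assms(2,3) by (intro sum_norm_le_variation) (auto simp: pairwise_def disjnt_def)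
  ultimately show "ereal (\<Sum>B\<in>P. norm (restr_meas \<nu> A B)) \<le> variation \<nu> S"
    by simp
qed

text \<open>The norm \<open>|m|(\<Omega>)\<close> of \<open>M(\<Omega>,E\<^sup>*)\<close>, with junk value \<open>0\<close> if the variation is infinite.\<close>

definition total_variation :: "('w::topological_space set \<Rightarrow> 'b::real_normed_vector) \<Rightarrow> real" where
  "total_variation \<nu> = real_of_ereal (variation \<nu> UNIV)"

lemma sum_norm_le_total_variation:
  fixes \<nu> :: "'w::topological_space set \<Rightarrow> 'b::real_normed_vector"
  assumes "variation \<nu> UNIV < \<infinity>" "finite Q" "Q \<subseteq> sets borel" "disjoint Q"
  shows "(\<Sum>B\<in>Q. norm (\<nu> B)) \<le> total_variation \<nu>"
proof -
  have "ereal (\<Sum>B\<in>Q. norm (\<nu> B)) \<le> variation \<nu> UNIV"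
    using assms by (intro sum_norm_le_variation) auto
  then show ?thesis
    using assms(1) unfolding total_variation_def by (cases "variation \<nu> UNIV") auto
qed

lemma total_variation_nonneg:
  fixes \<nu> :: "'w::topological_space set \<Rightarrow> 'b::real_normed_vector"
  assumes "variation \<nu> UNIV < \<infinity>"
  shows "0 \<le> total_variation \<nu>"
  using sum_norm_le_total_variation[OF assms, of "{}"] by simp

section \<open>Common refinements of finite partitions\<close>

definition atom :: "'a set set \<Rightarrow> 'a \<Rightarrow> 'a set" where
  "atom S x = (\<Inter>T\<in>S. if x \<in> T then T else - T)"

definition atoms :: "'a set set \<Rightarrow> 'a set set" where
  "atoms S = range (atom S)"

lemma atom_self: "x \<in> atom S x"
  by (auto simp: atom_def)

lemma mem_atom_iff: "z \<in> atom S x \<Longrightarrow> T \<in> S \<Longrightarrow> z \<in> T \<longleftrightarrow> x \<in> T"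
  by (auto simp: atom_def split: if_splits)

lemma atom_subset: "T \<in> S \<Longrightarrow> x \<in> T \<Longrightarrow> atom S x \<subseteq> T"
  using mem_atom_iff[of _ S x T] by blast

lemma atoms_finite:
  assumes "finite S"
  shows "finite (atoms S)"
proof -
  have "atom S x = (\<lambda>U. \<Inter>T\<in>S. if T \<in> U then T else - T) {T\<in>S. x \<in> T}" for x
    unfolding atom_def by (intro INF_cong) auto
  then have "atoms S \<subseteq> (\<lambda>U. \<Inter>T\<in>S. if T \<in> U then T else - T) ` Pow S"
    unfolding atoms_def by blast
  then show ?thesis
    using assms by (meson finite_Pow_iff finite_imageI finite_subset)
qed

lemma atoms_disjoint: "disjoint (atoms S)"
  unfolding pairwise_def atoms_def
proof (intro ballI impI)
  fix D D' assume "D \<in> range (atom S)" "D' \<in> range (atom S)" "D \<noteq> D'"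
  then obtain x y where xy: "D = atom S x" "D' = atom S y" and ne: "atom S x \<noteq> atom S y"
    by blast
  have "\<exists>T\<in>S. \<not> (x \<in> T \<longleftrightarrow> y \<in> T)"
  proof (rule ccontr)
    assume "\<not> ?thesis"
    then have "atom S x = atom S y"
      unfolding atom_def by (intro INF_cong) auto
    then show False
      using ne by simp
  qed
  then obtain T where T: "T \<in> S" "\<not> (x \<in> T \<longleftrightarrow> y \<in> T)"
    by blast
  show "disjnt D D'"
    unfolding disjnt_def xy using mem_atom_iff[OF _ T(1)] T(2) by blast
qed

lemma Union_atoms: "\<Union>(atoms S) = UNIV"
  unfolding atoms_def using atom_self by fast

lemma atoms_nonempty: "D \<in> atoms S \<Longrightarrow> D \<noteq> {}"
  unfolding atoms_def using atom_self by fast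

lemma atoms_borel_parts:
  assumes "finite S" "S \<subseteq> sets borel"
  shows "atoms S \<in> borel_parts UNIV"
proof -
  have "atoms S \<subseteq> sets borel"
  proof
    fix D assume "D \<in> atoms S"
    then obtain x where D: "D = atom S x"
      by (auto simp: atoms_def)
    show "D \<in> sets borel"
    proof (cases "S = {}")
      case False
      show ?thesis
        unfolding D atom_def by (rule sets.finite_INT) (use assms False in auto)
    qed (simp add: D atom_def)
  qed
  then show ?thesis
    using atoms_finite[OF assms(1)] atoms_disjoint[of S] Union_atoms[of S]
    unfolding borel_parts_def by simp
qed

lemma atoms_subset_or_disjoint:
  assumes "D \<in> atoms S" "T \<in> S"
  shows "D \<subseteq> T \<or> D \<inter> T = {}"
proof -
  obtain x where D: "D = atom S x"
    using assms(1) by (auto simp: atoms_def)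
  show ?thesis
  proof (cases "x \<in> T")
    case True
    then show ?thesis
      using D atom_subset[OF assms(2)] by blast
  next
    case False
    then show ?thesis
      using D mem_atom_iff[of _ S x T] assms(2) by blast
  qed
qed

definition finer_than :: "'a set set \<Rightarrow> 'a set set \<Rightarrow> bool" where
  "finer_than R P \<longleftrightarrow> (\<forall>D\<in>R. D \<noteq> {} \<and> (\<exists>B\<in>P. D \<subseteq> B))"

lemma atoms_finer_than:
  assumes "P \<subseteq> S" "\<Union>P = UNIV"
  shows "finer_than (atoms S) P"
  unfolding finer_than_def
proof
  fix D assume "D \<in> atoms S"
  then obtain x where D: "D = atom S x"
    by (auto simp: atoms_def)
  have "x \<in> \<Union>P"
    using assms(2) by simp
  then obtain B where "B \<in> P" "x \<in> B"
    by blast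
  then have "D \<subseteq> B"
    unfolding D using assms(1) by (intro atom_subset) auto
  then show "D \<noteq> {} \<and> (\<exists>B\<in>P. D \<subseteq> B)"
    using \<open>B \<in> P\<close> \<open>D \<in> atoms S\<close> atoms_nonempty by blast
qed

lemma finer_than_Union_pieces:
  assumes "finer_than R P" "\<Union>R = UNIV" "disjoint P" "B \<in> P"
  shows "\<Union>{D\<in>R. D \<subseteq> B} = B"
proof
  show "B \<subseteq> \<Union>{D\<in>R. D \<subseteq> B}"
  proof
    fix x assume "x \<in> B"
    have "x \<in> \<Union>R"
      using assms(2) by simp
    then obtain D where D: "D \<in> R" "x \<in> D"
      by blast
    then obtain B' where B': "B' \<in> P" "D \<subseteq> B'"
      using assms(1) by (auto simp: finer_than_def)
    have "B' = B"
    proof (rule ccontr)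
      assume "B' \<noteq> B"
      then have "B' \<inter> B = {}"
        using assms(3,4) B'(1) unfolding pairwise_def disjnt_def by blast
      then show False
        using D(2) B'(2) \<open>x \<in> B\<close> by blast
    qed
    then show "x \<in> \<Union>{D\<in>R. D \<subseteq> B}"
      using D B' by blast
  qed
  show "\<Union>{D\<in>R. D \<subseteq> B} \<subseteq> B"
    by blast
qed

lemma sum_finer_than:
  assumes "finer_than R P" "finite P" "finite R" "disjoint P"
  shows "(\<Sum>D\<in>R. F D) = (\<Sum>B\<in>P. \<Sum>D\<in>{D\<in>R. D \<subseteq> B}. F D)"
proof -
  have R_eq: "(\<Union>B\<in>P. {D\<in>R. D \<subseteq> B}) = R"
    using assms(1) by (auto simp: finer_than_def)
  have "{D\<in>R. D \<subseteq> B} \<inter> {D\<in>R. D \<subseteq> B'} = {}" if "B \<in> P" "B' \<in> P" "B \<noteq> B'" for B B'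
  proof -
    have "B \<inter> B' = {}"
      using assms(4) that unfolding pairwise_def disjnt_def by blast
    then show ?thesis
      using assms(1) unfolding finer_than_def by blast
  qed
  then have "(\<Sum>B\<in>P. \<Sum>D\<in>{D\<in>R. D \<subseteq> B}. F D) = (\<Sum>D\<in>(\<Union>B\<in>P. {D\<in>R. D \<subseteq> B}). F D)"
    using assms(2,3) by (intro sum.UNION_disjoint[symmetric]) auto
  then show ?thesis
    by (simp only: R_eq)
qed

lemma common_refinement:
  assumes P: "P \<in> borel_parts UNIV" and Q: "Q \<in> borel_parts UNIV" and S: "finite S" "S \<subseteq> sets borel"
  obtains R where "R \<in> borel_parts UNIV" "finer_than R P" "finer_than R Q"
    "\<And>D T. D \<in> R \<Longrightarrow> T \<in> S \<Longrightarrow> D \<subseteq> T \<or> D \<inter> T = {}"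
proof -
  define R where "R = atoms (P \<union> Q \<union> S)"
  have "finite P" "P \<subseteq> sets borel" "\<Union>P = UNIV" "finite Q" "Q \<subseteq> sets borel" "\<Union>Q = UNIV"
    using P Q by (auto simp: borel_parts_def)
  then have "R \<in> borel_parts UNIV" "finer_than R P" "finer_than R Q"
    using S unfolding R_def by (auto intro!: atoms_borel_parts atoms_finer_than)
  moreover have "D \<subseteq> T \<or> D \<inter> T = {}" if "D \<in> R" "T \<in> S" for D T
    using that unfolding R_def by (intro atoms_subset_or_disjoint[of D "P \<union> Q \<union> S"]) auto
  ultimately show ?thesis
    by (rule that)
qed
section \<open>Riemann sums and the pairing\<close>

definition riemann_sum ::
    "('w \<Rightarrow> 'e::real_normed_vector) \<Rightarrow> ('w set \<Rightarrow> ('e \<Rightarrow>\<^sub>L real)) \<Rightarrow> 'w set set \<Rightarrow> ('w set \<Rightarrow> 'w) \<Rightarrow> real" where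
  "riemann_sum g m P t = (\<Sum>B\<in>P. blinfun_apply (m B) (g (t B)))"

definition osc_le :: "('w \<Rightarrow> 'b::metric_space) \<Rightarrow> 'w set set \<Rightarrow> real \<Rightarrow> bool" where
  "osc_le g P \<delta> \<longleftrightarrow> (\<forall>B\<in>P. \<forall>u\<in>B. \<forall>v\<in>B. dist (g u) (g v) \<le> \<delta>)"

definition tagged :: "'w set set \<Rightarrow> ('w set \<Rightarrow> 'w) \<Rightarrow> bool" where
  "tagged P t \<longleftrightarrow> (\<forall>B\<in>P. B \<noteq> {} \<longrightarrow> t B \<in> B)"

definition point_of :: "'a set \<Rightarrow> 'a" where
  "point_of B = (SOME x. x \<in> B)"

lemma tagged_point_of: "tagged P point_of"
  by (simp add: tagged_def point_of_def some_in_eq)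

lemma osc_le_if_dist_less:
  "\<forall>B\<in>P. \<forall>u\<in>B. \<forall>v\<in>B. dist (g u) (g v) < \<delta> \<Longrightarrow> osc_le g P \<delta>"
  by (auto simp: osc_le_def less_imp_le)

lemma osc_le_finer_than:
  assumes "osc_le g P \<delta>" "finer_than R P"
  shows "osc_le g R \<delta>"
  unfolding osc_le_def
proof (intro ballI)
  fix D u v assume "D \<in> R" "u \<in> D" "v \<in> D"
  then obtain B where "B \<in> P" "u \<in> B" "v \<in> B"
    using assms(2) unfolding finer_than_def by blast
  then show "dist (g u) (g v) \<le> \<delta>"
    using assms(1) unfolding osc_le_def by blast
qed

lemma fine_borel_partition:
  fixes g :: "'w::topological_space \<Rightarrow> 'b::metric_space"
  assumes cpt: "compact (UNIV::'w set)" and g: "continuous_on UNIV g" and "\<delta> > 0"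
  obtains P where "P \<in> borel_parts UNIV" "osc_le g P \<delta>"
proof -
  define F where "F u = g -` ball (g u) (\<delta> / 2)" for u
  have F_open: "open (F u)" for u
  proof -
    have "open (g -` ball (g u) (\<delta> / 2) \<inter> UNIV)"
      using continuous_on_open_vimage[OF open_UNIV, THEN iffD1, OF g] open_ball by blast
    then show ?thesis
      by (simp add: F_def)
  qed
  have "UNIV \<subseteq> (\<Union>u\<in>UNIV. F u)"
    using \<open>\<delta> > 0\<close> by (auto simp: F_def)
  then obtain C where C: "finite C" "UNIV \<subseteq> (\<Union>u\<in>C. F u)"
    by (rule compactE_image[OF cpt F_open])
  have small: "dist (g u) (g v) < \<delta>" if "u \<in> F c" "v \<in> F c" for c u v
  proof -
    have "dist (g u) (g c) < \<delta> / 2" "dist (g v) (g c) < \<delta> / 2"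
      using that by (simp_all add: F_def dist_commute)
    then show ?thesis
      by (rule dist_triangle_half_l)
  qed
  have "\<Union>(F ` C) = UNIV"
    using C(2) by blast
  then have fine: "finer_than (atoms (F ` C)) (F ` C)"
    by (intro atoms_finer_than) simp
  show ?thesis
  proof
    show "atoms (F ` C) \<in> borel_parts UNIV"
      using C(1) F_open by (intro atoms_borel_parts) auto
    show "osc_le g (atoms (F ` C)) \<delta>"
    proof (rule osc_le_if_dist_less, intro ballI)
      fix D u v assume "D \<in> atoms (F ` C)" "u \<in> D" "v \<in> D"
      then obtain c where "D \<subseteq> F c"
        using fine unfolding finer_than_def by blast
      then show "dist (g u) (g v) < \<delta>"
        using small \<open>u \<in> D\<close> \<open>v \<in> D\<close> by blast
    qed
  qed
qed

lemma riemann_sum_finer_than: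
  fixes g :: "'w::topological_space \<Rightarrow> 'e::real_normed_vector"
  assumes m: "m \<in> Mspace"
    and P: "P \<in> borel_parts UNIV" "osc_le g P \<delta>" "tagged P t" "0 \<le> \<delta>"
    and R: "R \<in> borel_parts UNIV" "finer_than R P" "tagged R s"
  shows "\<bar>riemann_sum g m P t - riemann_sum g m R s\<bar> \<le> \<delta> * total_variation m"
proof -
  have Pf: "finite P" "disjoint P"
    using P(1) by (auto simp: borel_parts_def)
  have Rf: "finite R" "R \<subseteq> sets borel" "disjoint R" "\<Union>R = UNIV"
    using R(1) by (auto simp: borel_parts_def)
  define RB where "RB B = {D\<in>R. D \<subseteq> B}" for B
  have "m B = (\<Sum>D\<in>RB B. m D)" if "B \<in> P" for B
  proof -
    have "m (\<Union>(RB B)) = (\<Sum>D\<in>RB B. m D)"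
      using Rf by (intro Mspace_Union[OF m]) (auto simp: RB_def intro: pairwise_subset)
    then show ?thesis
      using finer_than_Union_pieces[OF R(2) Rf(4) Pf(2) that] by (simp add: RB_def)
  qed
  then have "riemann_sum g m P t = (\<Sum>B\<in>P. \<Sum>D\<in>RB B. blinfun_apply (m D) (g (t B)))"
    unfolding riemann_sum_def by (simp add: blinfun.sum_left)
  moreover have "riemann_sum g m R s = (\<Sum>B\<in>P. \<Sum>D\<in>RB B. blinfun_apply (m D) (g (s D)))"
    unfolding riemann_sum_def RB_def using R(2) Pf(1) Rf(1) Pf(2) by (rule sum_finer_than)
  ultimately have "riemann_sum g m P t - riemann_sum g m R s
      = (\<Sum>B\<in>P. \<Sum>D\<in>RB B. blinfun_apply (m D) (g (t B) - g (s D)))"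
    by (simp add: sum_subtractf blinfun.diff_right)
  also have "\<bar>\<dots>\<bar> \<le> (\<Sum>B\<in>P. \<Sum>D\<in>RB B. \<bar>blinfun_apply (m D) (g (t B) - g (s D))\<bar>)"
    by (rule order_trans[OF sum_abs]) (intro sum_mono sum_abs)
  also have "\<dots> \<le> (\<Sum>B\<in>P. \<Sum>D\<in>RB B. \<delta> * norm (m D))"
  proof (intro sum_mono)
    fix B D assume "B \<in> P" "D \<in> RB B"
    then have "D \<noteq> {}" "D \<in> R" "D \<subseteq> B"
      using R(2) by (auto simp: RB_def finer_than_def)
    then have "s D \<in> B" "t B \<in> B"
      using R(3) P(3) \<open>B \<in> P\<close> by (auto simp: tagged_def)
    then have "norm (g (t B) - g (s D)) \<le> \<delta>"
      using P(2) \<open>B \<in> P\<close> by (auto simp: osc_le_def dist_norm)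
    then have "norm (m D) * norm (g (t B) - g (s D)) \<le> norm (m D) * \<delta>"
      by (simp add: mult_left_mono)
    then show "\<bar>blinfun_apply (m D) (g (t B) - g (s D))\<bar> \<le> \<delta> * norm (m D)"
      using norm_blinfun[of "m D" "g (t B) - g (s D)"] by (simp add: mult.commute)
  qed
  also have "\<dots> = \<delta> * (\<Sum>D\<in>R. norm (m D))"
    by (simp add: sum_finer_than[OF R(2) Pf(1) Rf(1) Pf(2)] RB_def sum_distrib_left)
  also have "\<dots> \<le> \<delta> * total_variation m"
    using sum_norm_le_total_variation[OF Mspace_variation_finite[OF m] Rf(1-3)] P(4)
    by (rule mult_left_mono)
  finally show ?thesis .
qed

lemma riemann_sum_close:
  fixes g :: "'w::topological_space \<Rightarrow> 'e::real_normed_vector"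
  assumes m: "m \<in> Mspace"
    and P: "P \<in> borel_parts UNIV" "osc_le g P \<delta>" "tagged P t" "0 \<le> \<delta>"
    and Q: "Q \<in> borel_parts UNIV" "osc_le g Q \<delta>'" "tagged Q s" "0 \<le> \<delta>'"
  shows "\<bar>riemann_sum g m P t - riemann_sum g m Q s\<bar> \<le> (\<delta> + \<delta>') * total_variation m"
proof -
  obtain R where R: "R \<in> borel_parts UNIV" "finer_than R P" "finer_than R Q"
    using common_refinement[OF P(1) Q(1), of "{}"] by auto
  have "\<bar>riemann_sum g m P t - riemann_sum g m R point_of\<bar> \<le> \<delta> * total_variation m"
    by (rule riemann_sum_finer_than[OF m P R(1,2) tagged_point_of])
  moreover have "\<bar>riemann_sum g m Q s - riemann_sum g m R point_of\<bar> \<le> \<delta>' * total_variation m"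
    by (rule riemann_sum_finer_than[OF m Q R(1,3) tagged_point_of])
  ultimately show ?thesis
    by (simp add: distrib_right abs_le_iff)
qed

lemma Cauchy_if_dist_le_null:
  fixes c :: "nat \<Rightarrow> 'a::metric_space"
  assumes "\<And>n k. dist (c n) (c k) \<le> e n + e k" "e \<longlonglongrightarrow> 0"
  shows "Cauchy c"
proof (rule metric_CauchyI)
  fix \<epsilon> :: real assume "0 < \<epsilon>"
  then obtain M where M: "\<And>n. n \<ge> M \<Longrightarrow> e n < \<epsilon> / 2"
    using order_tendstoD(2)[OF assms(2), of "\<epsilon> / 2"] by (auto simp: eventually_sequentially)
  have "dist (c n) (c k) < \<epsilon>" if "n \<ge> M" "k \<ge> M" for n k
    using assms(1)[of n k] M[OF that(1)] M[OF that(2)] by linarith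
  then show "\<exists>M. \<forall>n\<ge>M. \<forall>k\<ge>M. dist (c n) (c k) < \<epsilon>"
    by blast
qed

lemma riemann_sum_converges:
  fixes g :: "'w::topological_space \<Rightarrow> 'e::real_normed_vector"
  assumes cpt: "compact (UNIV :: 'w set)" and g: "continuous_on UNIV g" and m: "m \<in> Mspace"
  obtains c where "\<And>P t \<delta>. P \<in> borel_parts UNIV \<Longrightarrow> osc_le g P \<delta> \<Longrightarrow> tagged P t \<Longrightarrow> 0 \<le> \<delta> \<Longrightarrow>
      \<bar>c - riemann_sum g m P t\<bar> \<le> \<delta> * total_variation m"
proof -
  define V where "V = total_variation m"
  have V: "0 \<le> V"
    unfolding V_def by (rule total_variation_nonneg[OF Mspace_variation_finite[OF m]])
  define e where "e n = inverse (real (Suc n))" for n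
  have e: "0 < e n" for n
    by (simp add: e_def)
  have e_lim: "e \<longlonglongrightarrow> 0"
    unfolding e_def by (rule LIMSEQ_inverse_real_of_nat)
  have "\<exists>P. P \<in> borel_parts UNIV \<and> osc_le g P (e n)" for n
    using fine_borel_partition[OF cpt g e] by blast
  then obtain PP where PP: "\<And>n. PP n \<in> borel_parts UNIV" "\<And>n. osc_le g (PP n) (e n)"
    by metis
  define c where "c n = riemann_sum g m (PP n) point_of" for n
  have close: "\<bar>c n - riemann_sum g m P t\<bar> \<le> (e n + \<delta>) * V"
    if "P \<in> borel_parts UNIV" "osc_le g P \<delta>" "tagged P t" "0 \<le> \<delta>" for n P t \<delta>
    unfolding c_def V_def using e[of n] by (intro riemann_sum_close[OF m PP(1,2) tagged_point_of _ that]) simp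
  have "dist (c n) (c k) \<le> e n * V + e k * V" for n k
    using close[OF PP(1)[of k] PP(2)[of k] tagged_point_of, of n] e[of k]
    by (simp add: c_def dist_real_def algebra_simps)
  moreover have "(\<lambda>n. e n * V) \<longlonglongrightarrow> 0"
    using tendsto_mult_left_zero[OF e_lim] by (simp add: mult.commute)
  ultimately have "Cauchy c"
    by (rule Cauchy_if_dist_le_null)
  then obtain c\<^sub>0 where c\<^sub>0: "c \<longlonglongrightarrow> c\<^sub>0"
    using Cauchy_convergent convergent_def by blast
  show ?thesis
  proof (rule that)
    fix P t \<delta> assume P: "P \<in> borel_parts UNIV" "osc_le g P \<delta>" "tagged P t" "0 \<le> \<delta>"
    have "(\<lambda>n. \<bar>c n - riemann_sum g m P t\<bar>) \<longlonglongrightarrow> \<bar>c\<^sub>0 - riemann_sum g m P t\<bar>"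
      by (intro tendsto_intros c\<^sub>0)
    moreover have "(\<lambda>n. (e n + \<delta>) * V) \<longlonglongrightarrow> (0 + \<delta>) * V"
      by (intro tendsto_intros e_lim)
    ultimately have "\<bar>c\<^sub>0 - riemann_sum g m P t\<bar> \<le> (0 + \<delta>) * V"
      by (rule LIMSEQ_le) (use close[OF P] in blast)
    then show "\<bar>c\<^sub>0 - riemann_sum g m P t\<bar> \<le> \<delta> * total_variation m"
      by (simp add: V_def)
  qed
qed

definition riemann_limit ::
    "('w::topological_space \<Rightarrow> 'e::real_normed_vector) \<Rightarrow> ('w set \<Rightarrow> ('e \<Rightarrow>\<^sub>L real)) \<Rightarrow> real \<Rightarrow> bool" where
  "riemann_limit g m c \<longleftrightarrow> (\<forall>\<epsilon>>0. \<exists>\<delta>>0. \<forall>P t. P \<in> borel_parts UNIV \<longrightarrow>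
      (\<forall>B\<in>P. \<forall>u\<in>B. \<forall>v\<in>B. dist (g u) (g v) < \<delta>) \<longrightarrow> tagged P t \<longrightarrow>
      \<bar>c - riemann_sum g m P t\<bar> \<le> \<epsilon>)"

lemma pairing_eq_The_riemann_limit: "pairing f m = (THE c. riemann_limit f m c)"
  by (simp add: pairing_def riemann_limit_def tagged_def riemann_sum_def)

lemma riemann_limitI:
  assumes "0 \<le> K"
    and "\<And>P t \<delta>. P \<in> borel_parts UNIV \<Longrightarrow> osc_le g P \<delta> \<Longrightarrow> tagged P t \<Longrightarrow> 0 \<le> \<delta> \<Longrightarrow>
      \<bar>c - riemann_sum g m P t\<bar> \<le> \<delta> * K"
  shows "riemann_limit g m c"
  unfolding riemann_limit_def
proof (intro allI impI)
  fix \<epsilon> :: real assume "0 < \<epsilon>"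
  have "\<bar>c - riemann_sum g m P t\<bar> \<le> \<epsilon>"
    if "P \<in> borel_parts UNIV" "\<forall>B\<in>P. \<forall>u\<in>B. \<forall>v\<in>B. dist (g u) (g v) < \<epsilon> / (K + 1)" "tagged P t"
    for P t
  proof -
    have "0 \<le> \<epsilon> / (K + 1)"
      using assms(1) \<open>0 < \<epsilon>\<close> by simp
    then have "\<bar>c - riemann_sum g m P t\<bar> \<le> \<epsilon> / (K + 1) * K"
      by (rule assms(2)[OF that(1) osc_le_if_dist_less[OF that(2)] that(3)])
    also have "\<dots> \<le> \<epsilon>"
      using assms(1) \<open>0 < \<epsilon>\<close> by (simp add: field_simps)
    finally show ?thesis .
  qed
  then show "\<exists>\<delta>>0. \<forall>P t. P \<in> borel_parts UNIV \<longrightarrow> (\<forall>B\<in>P. \<forall>u\<in>B. \<forall>v\<in>B. dist (g u) (g v) < \<delta>) \<longrightarrow>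
      tagged P t \<longrightarrow> \<bar>c - riemann_sum g m P t\<bar> \<le> \<epsilon>"
    using assms(1) \<open>0 < \<epsilon>\<close> by (intro exI[of _ "\<epsilon> / (K + 1)"]) auto
qed

lemma riemann_limit_unique:
  fixes g :: "'w::topological_space \<Rightarrow> 'e::real_normed_vector"
  assumes cpt: "compact (UNIV :: 'w set)" and g: "continuous_on UNIV g"
    and c: "riemann_limit g m c" and c': "riemann_limit g m c'"
  shows "c = c'"
proof (rule ccontr)
  assume "c \<noteq> c'"
  define \<epsilon> where "\<epsilon> = \<bar>c - c'\<bar> / 3"
  have "0 < \<epsilon>"
    using \<open>c \<noteq> c'\<close> by (simp add: \<epsilon>_def)
  obtain \<delta> where "\<delta> > 0"
    and \<delta>: "\<forall>P t. P \<in> borel_parts UNIV \<longrightarrow> (\<forall>B\<in>P. \<forall>u\<in>B. \<forall>v\<in>B. dist (g u) (g v) < \<delta>) \<longrightarrow>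
      tagged P t \<longrightarrow> \<bar>c - riemann_sum g m P t\<bar> \<le> \<epsilon>"
    using c[unfolded riemann_limit_def, rule_format, OF \<open>0 < \<epsilon>\<close>] by blast
  obtain \<delta>' where "\<delta>' > 0"
    and \<delta>': "\<forall>P t. P \<in> borel_parts UNIV \<longrightarrow> (\<forall>B\<in>P. \<forall>u\<in>B. \<forall>v\<in>B. dist (g u) (g v) < \<delta>') \<longrightarrow>
      tagged P t \<longrightarrow> \<bar>c' - riemann_sum g m P t\<bar> \<le> \<epsilon>"
    using c'[unfolded riemann_limit_def, rule_format, OF \<open>0 < \<epsilon>\<close>] by blast
  obtain P where P: "P \<in> borel_parts UNIV" "osc_le g P (min \<delta> \<delta>' / 2)"
    using fine_borel_partition[OF cpt g, of "min \<delta> \<delta>' / 2"] \<open>\<delta> > 0\<close> \<open>\<delta>' > 0\<close> by auto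
  have "min \<delta> \<delta>' / 2 < \<delta>" "min \<delta> \<delta>' / 2 < \<delta>'"
    using \<open>\<delta> > 0\<close> \<open>\<delta>' > 0\<close> by (auto simp: min_def)
  then have fine: "\<forall>B\<in>P. \<forall>u\<in>B. \<forall>v\<in>B. dist (g u) (g v) < \<delta>"
      "\<forall>B\<in>P. \<forall>u\<in>B. \<forall>v\<in>B. dist (g u) (g v) < \<delta>'"
    using P(2) unfolding osc_le_def by (blast intro: le_less_trans)+
  have "\<bar>c - riemann_sum g m P point_of\<bar> \<le> \<epsilon>" "\<bar>c' - riemann_sum g m P point_of\<bar> \<le> \<epsilon>"
    using \<delta>[rule_format (no_asm), OF P(1) fine(1) tagged_point_of]
      \<delta>'[rule_format (no_asm), OF P(1) fine(2) tagged_point_of] .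
  then have "\<bar>c - c'\<bar> \<le> 2 * \<epsilon>"
    by linarith
  then show False
    using \<open>0 < \<epsilon>\<close> by (simp add: \<epsilon>_def)
qed

lemma pairing_riemann_sum:
  fixes f :: "'w::topological_space \<Rightarrow>\<^sub>C 'e::real_normed_vector"
  assumes cpt: "compact (UNIV :: 'w set)" and m: "m \<in> Mspace"
    and P: "P \<in> borel_parts UNIV" "osc_le f P \<delta>" "tagged P t" "0 \<le> \<delta>"
  shows "\<bar>pairing f m - riemann_sum f m P t\<bar> \<le> \<delta> * total_variation m"
proof -
  obtain c where c: "\<And>P t \<delta>. P \<in> borel_parts UNIV \<Longrightarrow> osc_le f P \<delta> \<Longrightarrow> tagged P t \<Longrightarrow> 0 \<le> \<delta> \<Longrightarrow>
      \<bar>c - riemann_sum f m P t\<bar> \<le> \<delta> * total_variation m"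
    using riemann_sum_converges[OF cpt _ m, of f] by auto
  have "riemann_limit f m c"
    using c total_variation_nonneg[OF Mspace_variation_finite[OF m]] by (intro riemann_limitI)
  moreover have "c' = c" if "riemann_limit f m c'" for c'
    using riemann_limit_unique[OF cpt _ that \<open>riemann_limit f m c\<close>] by simp
  ultimately have "pairing f m = c"
    unfolding pairing_eq_The_riemann_limit by (rule the_equality)
  then show ?thesis
    using c[OF P] by simp
qed

lemma regular_signed_borel_restr_meas:
  fixes \<mu> :: "'w::t2_space set \<Rightarrow> real"
  assumes \<mu>: "regular_signed_borel \<mu>" and A: "A \<in> sets borel"
  shows "regular_signed_borel (restr_meas \<mu> A)"
  unfolding regular_signed_borel_def
proof (intro conjI allI impI ballI)
  fix S :: "nat \<Rightarrow> 'w set" assume S: "range S \<subseteq> sets borel" "disjoint_family S"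
  have "range (\<lambda>n. A \<inter> S n) \<subseteq> sets borel" "disjoint_family (\<lambda>n. A \<inter> S n)"
    using S A by (auto simp: disjoint_family_on_def)
  then have "(\<lambda>n. \<mu> (A \<inter> S n)) sums \<mu> (\<Union>n. A \<inter> S n)"
    by (rule regular_signed_borel_sums[OF \<mu>])
  moreover have "(\<Union>n. A \<inter> S n) = A \<inter> (\<Union>n. S n)" "(\<Union>n. S n) \<in> sets borel"
    using S by auto
  ultimately show "(\<lambda>n. restr_meas \<mu> A (S n)) sums restr_meas \<mu> A (\<Union>n. S n)"
    using S by (auto simp: restr_meas_def)
next
  have "variation (restr_meas \<mu> A) UNIV \<le> variation \<mu> UNIV"
    using regular_signed_borel_empty[OF \<mu>] A by (rule variation_restr_meas_le) simp
  also have "\<dots> < \<infinity>"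
    using \<mu> by (simp add: regular_signed_borel_def)
  finally show "variation (restr_meas \<mu> A) UNIV < \<infinity>" .
next
  fix S :: "'w set" and \<epsilon> :: real assume S: "S \<in> sets borel" and "0 < \<epsilon>"
  then obtain K U where KU: "compact K" "open U" "K \<subseteq> S" "S \<subseteq> U" "variation \<mu> (U - K) < ereal \<epsilon>"
    using regular_signed_borel_compact_open[OF \<mu>] by blast
  have "U - K \<in> sets borel"
    using KU(1,2) by (intro sets.Diff borel_open borel_closed compact_imp_closed)
  then have "variation (restr_meas \<mu> A) (U - K) \<le> variation \<mu> (U - K)"
    using regular_signed_borel_empty[OF \<mu>] A by (intro variation_restr_meas_le)
  then show "\<exists>K U. compact K \<and> open U \<and> K \<subseteq> S \<and> S \<subseteq> U \<and> variation (restr_meas \<mu> A) (U - K) < ereal \<epsilon>"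
    using KU by (meson order.strict_trans1)
qed

lemma restr_meas_in_Mspace:
  fixes m :: "'w::t2_space set \<Rightarrow> ('e::real_normed_vector \<Rightarrow>\<^sub>L real)"
  assumes m: "m \<in> Mspace" and A: "A \<in> sets borel"
  shows "restr_meas m A \<in> Mspace"
  unfolding Mspace_def
proof (intro CollectI conjI allI impI)
  fix B :: "'w set" assume "B \<notin> sets borel"
  then show "restr_meas m A B = 0"
    by (simp add: restr_meas_def)
next
  have "variation (restr_meas m A) UNIV \<le> variation m UNIV"
    using Mspace_empty[OF m] A by (rule variation_restr_meas_le) simp
  then show "variation (restr_meas m A) UNIV < \<infinity>"
    using Mspace_variation_finite[OF m] by (rule le_less_trans)
next
  fix x
  have "(\<lambda>B. blinfun_apply (restr_meas m A B) x) = restr_meas (\<lambda>B. blinfun_apply (m B) x) A"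
    by (rule ext) (simp add: restr_meas_def)
  then show "regular_signed_borel (\<lambda>B. blinfun_apply (restr_meas m A B) x)"
    using regular_signed_borel_restr_meas[OF Mspace_regular[OF m] A] by simp
qed

lemma Mspace_compact_open:
  fixes m :: "'w::t2_space set \<Rightarrow> ('e::real_normed_vector \<Rightarrow>\<^sub>L real)"
  assumes m: "m \<in> Mspace" and A: "A \<in> sets borel" and X: "finite X" and "0 < \<eta>"
  obtains K U where "compact K" "open U" "K \<subseteq> A" "A \<subseteq> U"
    "\<And>x. x \<in> X \<Longrightarrow> variation (\<lambda>B. blinfun_apply (m B) x) (U - K) < ereal \<eta>"
proof -
  have "\<forall>x. \<exists>KU. compact (fst KU) \<and> open (snd KU) \<and> fst KU \<subseteq> A \<and> A \<subseteq> snd KU \<and>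
      variation (\<lambda>B. blinfun_apply (m B) x) (snd KU - fst KU) < ereal \<eta>"
  proof
    fix x
    obtain K U where "compact K" "open U" "K \<subseteq> A" "A \<subseteq> U"
        "variation (\<lambda>B. blinfun_apply (m B) x) (U - K) < ereal \<eta>"
      by (rule regular_signed_borel_compact_open[OF Mspace_regular[OF m] A \<open>0 < \<eta>\<close>])
    then show "\<exists>KU. compact (fst KU) \<and> open (snd KU) \<and> fst KU \<subseteq> A \<and> A \<subseteq> snd KU \<and>
        variation (\<lambda>B. blinfun_apply (m B) x) (snd KU - fst KU) < ereal \<eta>"
      by (intro exI[of _ "(K, U)"]) simp
  qed
  from choice[OF this] obtain KU where KU: "\<And>x. compact (fst (KU x))" "\<And>x. open (snd (KU x))"
      "\<And>x. fst (KU x) \<subseteq> A" "\<And>x. A \<subseteq> snd (KU x)"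
      "\<And>x. variation (\<lambda>B. blinfun_apply (m B) x) (snd (KU x) - fst (KU x)) < ereal \<eta>"
    by blast
  define K where "K = (\<Union>x\<in>X. fst (KU x))"
  define U where "U = (\<Inter>x\<in>X. snd (KU x))"
  show ?thesis
  proof
    show "compact K"
      unfolding K_def using X KU(1) by (intro compact_UN)
    show "open U"
      unfolding U_def using X KU(2) by (intro open_INT) simp_all
    show "K \<subseteq> A" "A \<subseteq> U"
      unfolding K_def U_def using KU(3,4) by fast+
  next
    fix x assume "x \<in> X"
    then have "U - K \<subseteq> snd (KU x) - fst (KU x)"
      unfolding K_def U_def by blast
    moreover have "snd (KU x) - fst (KU x) \<in> sets borel"
      using KU(1,2) by (intro sets.Diff borel_open borel_closed compact_imp_closed)
    ultimately have "variation (\<lambda>B. blinfun_apply (m B) x) (U - K)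
        \<le> variation (\<lambda>B. blinfun_apply (m B) x) (snd (KU x) - fst (KU x))"
      by (rule variation_mono)
    then show "variation (\<lambda>B. blinfun_apply (m B) x) (U - K) < ereal \<eta>"
      using KU(5) by (rule le_less_trans)
  qed
qed

definition cutoff :: "('w::topological_space \<Rightarrow> real) \<Rightarrow> bool" where
  "cutoff \<phi> \<longleftrightarrow> continuous_on UNIV \<phi> \<and> (\<forall>t. 0 \<le> \<phi> t \<and> \<phi> t \<le> 1)"

lemma cutoff_abs_le_1: "cutoff \<phi> \<Longrightarrow> \<bar>\<phi> t\<bar> \<le> 1"
  by (simp add: cutoff_def abs_le_iff)

lemma cutoff_one_minus: "cutoff \<phi> \<Longrightarrow> cutoff (\<lambda>t. 1 - \<phi> t)"
  unfolding cutoff_def by (auto intro!: continuous_intros)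

lemma cutoff_zero: "cutoff (\<lambda>_. 0)"
  by (simp add: cutoff_def)

lemma Urysohn_cutoff:
  fixes S T :: "'w::t2_space set"
  assumes "compact (UNIV::'w set)" "closed S" "closed T" "S \<inter> T = {}"
  obtains \<phi> :: "'w \<Rightarrow> real" where "cutoff \<phi>" "\<And>x. x \<in> S \<Longrightarrow> \<phi> x = 0" "\<And>x. x \<in> T \<Longrightarrow> \<phi> x = 1"
proof -
  have "normal_space (euclidean :: 'w topology)"
  proof (rule compact_Hausdorff_or_regular_imp_normal_space)
    show "compact_space (euclidean :: 'w topology)"
      using assms(1) by (simp add: compact_space_def)
    show "Hausdorff_space (euclidean :: 'w topology) \<or> regular_space euclidean"
      unfolding Hausdorff_space_def disjnt_def using hausdorff by auto
  qed
  then obtain \<phi> where \<phi>: "continuous_map euclidean (top_of_set {0..1::real}) \<phi>" "\<phi> ` S \<subseteq> {0}" "\<phi> ` T \<subseteq> {1}"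
    using Urysohn_lemma[of euclidean S T 0 1] assms(2-4) by (auto simp: disjnt_def)
  show ?thesis
  proof (rule that)
    show "cutoff \<phi>"
      using \<phi>(1) unfolding cutoff_def continuous_map_in_subtopology by auto
    show "\<phi> x = 0" if "x \<in> S" for x
      using \<phi>(2) that by blast
    show "\<phi> x = 1" if "x \<in> T" for x
      using \<phi>(3) that by blast
  qed
qed

text \<open>\<^const>\<open>Bcontfun\<close> yields junk unless \<open>\<phi>\<close> is bounded and continuous, hence the
  \<^const>\<open>cutoff\<close> hypotheses below.\<close>

definition mult_bcontfun ::
    "('w::topological_space \<Rightarrow> real) \<Rightarrow> ('w \<Rightarrow>\<^sub>C 'e::real_normed_vector) \<Rightarrow> ('w \<Rightarrow>\<^sub>C 'e)" where
  "mult_bcontfun \<phi> f = Bcontfun (\<lambda>x. \<phi> x *\<^sub>R f x)"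

lemma apply_mult_bcontfun:
  assumes "cutoff \<phi>"
  shows "mult_bcontfun \<phi> f x = \<phi> x *\<^sub>R f x"
proof -
  have "(\<lambda>x. \<phi> x *\<^sub>R f x) \<in> bcontfun"
  proof (rule bcontfun_normI)
    show "continuous_on UNIV (\<lambda>x. \<phi> x *\<^sub>R f x)"
      using assms by (auto simp: cutoff_def intro!: continuous_intros)
    fix x
    have "norm (\<phi> x *\<^sub>R f x) = \<bar>\<phi> x\<bar> * norm (f x)"
      by simp
    also have "\<dots> \<le> 1 * norm f"
      using cutoff_abs_le_1[OF assms] norm_bounded[of f x] by (intro mult_mono) auto
    finally show "norm (\<phi> x *\<^sub>R f x) \<le> norm f"
      by simp
  qed
  then show ?thesis
    unfolding mult_bcontfun_def by (simp add: Bcontfun_inverse)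
qed

lemma mult_bcontfun_add: "cutoff \<phi> \<Longrightarrow> mult_bcontfun \<phi> (f + g) = mult_bcontfun \<phi> f + mult_bcontfun \<phi> g"
  by (rule bcontfun_eqI) (simp add: apply_mult_bcontfun scaleR_right_distrib)

lemma mult_bcontfun_scaleR: "cutoff \<phi> \<Longrightarrow> mult_bcontfun \<phi> (c *\<^sub>R f) = c *\<^sub>R mult_bcontfun \<phi> f"
  by (rule bcontfun_eqI) (simp add: apply_mult_bcontfun)

lemma norm_mult_bcontfun_le:
  assumes "cutoff \<phi>"
  shows "norm (mult_bcontfun \<phi> f) \<le> norm f"
proof (rule norm_bound)
  fix x
  have "norm (mult_bcontfun \<phi> f x) = \<bar>\<phi> x\<bar> * norm (f x)"
    by (simp add: apply_mult_bcontfun[OF assms])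
  also have "\<dots> \<le> 1 * norm f"
    using cutoff_abs_le_1[OF assms] norm_bounded[of f x] by (intro mult_mono) auto
  finally show "norm (mult_bcontfun \<phi> f x) \<le> norm f"
    by simp
qed

definition mult_blinfun ::
    "('w::topological_space \<Rightarrow> real) \<Rightarrow> ('w \<Rightarrow>\<^sub>C 'e::real_normed_vector) \<Rightarrow>\<^sub>L ('w \<Rightarrow>\<^sub>C 'e)" where
  "mult_blinfun \<phi> = Blinfun (mult_bcontfun \<phi>)"

lemma blinfun_apply_mult_blinfun:
  fixes f :: "'w::topological_space \<Rightarrow>\<^sub>C 'e::real_normed_vector"
  assumes "cutoff \<phi>"
  shows "blinfun_apply (mult_blinfun \<phi>) f = mult_bcontfun \<phi> f"
proof -
  have "bounded_linear (mult_bcontfun \<phi> :: ('w \<Rightarrow>\<^sub>C 'e) \<Rightarrow> _)"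
    using assms
    by (intro bounded_linear_intro[where K=1])
      (simp_all add: mult_bcontfun_add mult_bcontfun_scaleR norm_mult_bcontfun_le)
  then show ?thesis
    unfolding mult_blinfun_def by (simp add: bounded_linear_Blinfun_apply)
qed

section \<open>Approximating a restriction by a cutoff\<close>

lemma cutoff_restr_meas_term_le:
  fixes m :: "'w::topological_space set \<Rightarrow> ('e::real_normed_vector \<Rightarrow>\<^sub>L real)"
  assumes m: "m \<in> Mspace" and \<phi>: "cutoff \<phi>" "\<And>x. x \<in> K \<Longrightarrow> \<phi> x = 1" "\<And>x. x \<notin> U \<Longrightarrow> \<phi> x = 0"
    and KAU: "K \<subseteq> A" "A \<subseteq> U" and D: "D \<in> sets borel" "t \<in> D"
    and split: "D \<subseteq> A \<or> D \<inter> A = {}" "D \<subseteq> K \<or> D \<inter> K = {}" "D \<subseteq> U \<or> D \<inter> U = {}"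
  shows "\<bar>blinfun_apply (m D) (\<phi> t *\<^sub>R y) - blinfun_apply (restr_meas m A D) y\<bar>
    \<le> (if D \<subseteq> U - K then \<bar>blinfun_apply (m D) y\<bar> else 0)"
proof -
  define a where "a = blinfun_apply (m D) y"
  have restr: "blinfun_apply (restr_meas m A D) y = (if D \<subseteq> A then a else 0)"
  proof (cases "D \<subseteq> A")
    case True
    then have "A \<inter> D = D"
      by blast
    then show ?thesis
      using True D(1) by (simp add: restr_meas_def a_def)
  next
    case False
    then have "A \<inter> D = {}"
      using split(1) by blast
    then show ?thesis
      using False D(1) Mspace_empty[OF m] by (simp add: restr_meas_def a_def)
  qed
  have lhs: "blinfun_apply (m D) (\<phi> t *\<^sub>R y) = \<phi> t * a"
    by (simp add: a_def blinfun.scaleR_right)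
  have \<phi>t: "0 \<le> \<phi> t" "\<phi> t \<le> 1"
    using \<phi>(1) by (auto simp: cutoff_def)
  consider "D \<subseteq> K" | "D \<inter> U = {}" | "D \<subseteq> U - K"
    using split(2,3) by blast
  then show ?thesis
  proof cases
    case 1
    then have "\<phi> t = 1" "D \<subseteq> A" "\<not> D \<subseteq> U - K"
      using \<phi>(2) D(2) KAU by blast+
    then show ?thesis
      by (simp add: lhs restr a_def[symmetric])
  next
    case 2
    then have "\<phi> t = 0" "\<not> D \<subseteq> A" "\<not> D \<subseteq> U - K"
      using \<phi>(3) D(2) KAU by blast+
    then show ?thesis
      by (simp add: lhs restr a_def[symmetric])
  next
    case 3
    have "\<bar>\<phi> t * a - a\<bar> = \<bar>\<phi> t - 1\<bar> * \<bar>a\<bar>"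
      by (simp add: abs_mult[symmetric] left_diff_distrib)
    also have "\<dots> \<le> \<bar>a\<bar>"
      using \<phi>t by (intro mult_left_le_one_le) auto
    finally have "\<bar>\<phi> t * a - a\<bar> \<le> \<bar>a\<bar>" .
    moreover have "\<bar>\<phi> t * a\<bar> \<le> \<bar>a\<bar>"
      using \<phi>t by (simp add: abs_mult mult_left_le_one_le)
    ultimately show ?thesis
      using 3 by (simp add: lhs restr a_def[symmetric])
  qed
qed

lemma riemann_sum_cutoff_restr_meas:
  fixes m :: "'w::topological_space set \<Rightarrow> ('e::real_normed_vector \<Rightarrow>\<^sub>L real)"
  assumes m: "m \<in> Mspace" and \<phi>: "cutoff \<phi>" "\<And>x. x \<in> K \<Longrightarrow> \<phi> x = 1" "\<And>x. x \<notin> U \<Longrightarrow> \<phi> x = 0"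
    and KAU: "K \<subseteq> A" "A \<subseteq> U" and R: "R \<in> borel_parts UNIV" "\<And>D. D \<in> R \<Longrightarrow> D \<noteq> {}"
    and split: "\<And>D T. D \<in> R \<Longrightarrow> T \<in> {A, K, U} \<Longrightarrow> D \<subseteq> T \<or> D \<inter> T = {}"
  shows "\<bar>riemann_sum (mult_bcontfun \<phi> f) m R point_of - riemann_sum f (restr_meas m A) R point_of\<bar>
    \<le> (\<Sum>D\<in>{D\<in>R. D \<subseteq> U - K}. \<bar>blinfun_apply (m D) (f (point_of D))\<bar>)"
proof -
  have Rf: "finite R" "R \<subseteq> sets borel"
    using R(1) by (auto simp: borel_parts_def)
  have "riemann_sum (mult_bcontfun \<phi> f) m R point_of - riemann_sum f (restr_meas m A) R point_of
      = (\<Sum>D\<in>R. blinfun_apply (m D) (\<phi> (point_of D) *\<^sub>R f (point_of D))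
          - blinfun_apply (restr_meas m A D) (f (point_of D)))"
    by (simp add: riemann_sum_def apply_mult_bcontfun[OF \<phi>(1)] sum_subtractf)
  also have "\<bar>\<dots>\<bar> \<le> (\<Sum>D\<in>R. \<bar>blinfun_apply (m D) (\<phi> (point_of D) *\<^sub>R f (point_of D))
          - blinfun_apply (restr_meas m A D) (f (point_of D))\<bar>)"
    by (rule sum_abs)
  also have "\<dots> \<le> (\<Sum>D\<in>R. if D \<subseteq> U - K then \<bar>blinfun_apply (m D) (f (point_of D))\<bar> else 0)"
  proof (rule sum_mono)
    fix D assume "D \<in> R"
    show "\<bar>blinfun_apply (m D) (\<phi> (point_of D) *\<^sub>R f (point_of D))
          - blinfun_apply (restr_meas m A D) (f (point_of D))\<bar>
        \<le> (if D \<subseteq> U - K then \<bar>blinfun_apply (m D) (f (point_of D))\<bar> else 0)"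
      using \<open>D \<in> R\<close> Rf(2) R(2) split[of D] tagged_point_of[of R]
      by (intro cutoff_restr_meas_term_le[OF m \<phi> KAU]) (auto simp: tagged_def)
  qed
  also have "\<dots> = (\<Sum>D\<in>{D\<in>R. D \<subseteq> U - K}. \<bar>blinfun_apply (m D) (f (point_of D))\<bar>)"
    using Rf(1) by (simp add: sum.inter_filter)
  finally show ?thesis .
qed

lemma sum_abs_le_net_variation:
  fixes m :: "'w::topological_space set \<Rightarrow> ('e::real_normed_vector \<Rightarrow>\<^sub>L real)"
  assumes m: "m \<in> Mspace"
    and Q: "finite Q" "Q \<subseteq> sets borel" "disjoint Q" "\<Union>Q \<subseteq> S" "S \<in> sets borel"
    and X: "finite X" and net: "\<And>D. D \<in> Q \<Longrightarrow> \<exists>x\<in>X. dist x (y D) < \<delta>" and "0 \<le> \<delta>"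
    and small: "\<And>x. x \<in> X \<Longrightarrow> variation (\<lambda>B. blinfun_apply (m B) x) S < ereal \<eta>"
  shows "(\<Sum>D\<in>Q. \<bar>blinfun_apply (m D) (y D)\<bar>) \<le> real (card X) * \<eta> + \<delta> * total_variation m"
proof -
  have "\<bar>blinfun_apply (m D) (y D)\<bar> \<le> (\<Sum>x\<in>X. \<bar>blinfun_apply (m D) x\<bar>) + \<delta> * norm (m D)"
    if D: "D \<in> Q" for D
  proof -
    obtain x where x: "x \<in> X" "dist x (y D) < \<delta>"
      using net[OF D] by blast
    have "\<bar>blinfun_apply (m D) (y D)\<bar> = \<bar>blinfun_apply (m D) x + blinfun_apply (m D) (y D - x)\<bar>"
      by (simp add: blinfun.diff_right)
    also have "\<dots> \<le> \<bar>blinfun_apply (m D) x\<bar> + \<bar>blinfun_apply (m D) (y D - x)\<bar>"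
      by (rule abs_triangle_ineq)
    also have "\<bar>blinfun_apply (m D) (y D - x)\<bar> \<le> norm (m D) * norm (y D - x)"
      using norm_blinfun[of "m D"] by simp
    also have "\<dots> \<le> norm (m D) * \<delta>"
      using x(2) by (intro mult_left_mono) (auto simp: dist_norm norm_minus_commute)
    also have "\<bar>blinfun_apply (m D) x\<bar> \<le> (\<Sum>x\<in>X. \<bar>blinfun_apply (m D) x\<bar>)"
      by (rule member_le_sum[OF x(1)]) (auto simp: X)
    finally show ?thesis
      by (simp add: mult.commute)
  qed
  then have "(\<Sum>D\<in>Q. \<bar>blinfun_apply (m D) (y D)\<bar>)
      \<le> (\<Sum>D\<in>Q. (\<Sum>x\<in>X. \<bar>blinfun_apply (m D) x\<bar>) + \<delta> * norm (m D))"
    by (rule sum_mono)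
  also have "\<dots> = (\<Sum>x\<in>X. \<Sum>D\<in>Q. \<bar>blinfun_apply (m D) x\<bar>) + \<delta> * (\<Sum>D\<in>Q. norm (m D))"
    by (simp add: sum.distrib sum_distrib_left sum.swap[of _ Q X])
  also have "\<dots> \<le> (\<Sum>x\<in>X. \<eta>) + \<delta> * total_variation m"
  proof (rule add_mono)
    have "(\<Sum>D\<in>Q. \<bar>blinfun_apply (m D) x\<bar>) \<le> \<eta>" if "x \<in> X" for x
    proof -
      have "ereal (\<Sum>D\<in>Q. norm (blinfun_apply (m D) x)) \<le> variation (\<lambda>B. blinfun_apply (m B) x) S"
        by (rule sum_norm_le_variation[OF Q])
      then show ?thesis
        using le_less_trans[OF _ small[OF that]] by fastforce
    qed
    then show "(\<Sum>x\<in>X. \<Sum>D\<in>Q. \<bar>blinfun_apply (m D) x\<bar>) \<le> (\<Sum>x\<in>X. \<eta>)"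
      by (rule sum_mono)
    show "\<delta> * (\<Sum>D\<in>Q. norm (m D)) \<le> \<delta> * total_variation m"
      using sum_norm_le_total_variation[OF Mspace_variation_finite[OF m] Q(1-3)] \<open>0 \<le> \<delta>\<close>
      by (rule mult_left_mono)
  qed
  finally show ?thesis
    by simp
qed

lemma pairing_restr_meas_approx:
  fixes m :: "'w::t2_space set \<Rightarrow> ('e::real_normed_vector \<Rightarrow>\<^sub>L real)" and f :: "'w \<Rightarrow>\<^sub>C 'e"
  assumes cpt: "compact (UNIV::'w set)" and m: "m \<in> Mspace" and A: "A \<in> sets borel" and "0 < \<eta>"
  obtains \<phi> where "cutoff \<phi>" "\<bar>pairing (mult_bcontfun \<phi> f) m - pairing f (restr_meas m A)\<bar> \<le> \<eta>"
proof -
  define mA where "mA = restr_meas m A"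
  have mA: "mA \<in> Mspace"
    unfolding mA_def by (rule restr_meas_in_Mspace[OF m A])
  define V where "V = total_variation m"
  define VA where "VA = total_variation mA"
  have V: "0 \<le> V" "0 \<le> VA"
    unfolding V_def VA_def
    using total_variation_nonneg[OF Mspace_variation_finite[OF m]]
      total_variation_nonneg[OF Mspace_variation_finite[OF mA]] by auto
  define \<delta> where "\<delta> = \<eta> / (4 * (V + VA + 1))"
  have "0 < \<delta>"
    using \<open>0 < \<eta>\<close> V by (simp add: \<delta>_def)
  have "compact (range f)"
    using cpt by (intro compact_continuous_image) simp
  then obtain X where X: "finite X" "range f \<subseteq> (\<Union>x\<in>X. ball x \<delta>)"
    using \<open>0 < \<delta>\<close> compact_eq_totally_bounded by metis
  define \<eta>\<^sub>0 where "\<eta>\<^sub>0 = \<eta> / (4 * (card X + 1))"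
  obtain K U where KU: "compact K" "open U" "K \<subseteq> A" "A \<subseteq> U"
      "\<And>x. x \<in> X \<Longrightarrow> variation (\<lambda>B. blinfun_apply (m B) x) (U - K) < ereal \<eta>\<^sub>0"
    using Mspace_compact_open[OF m A X(1), of \<eta>\<^sub>0] \<open>0 < \<eta>\<close> by (auto simp: \<eta>\<^sub>0_def)
  have "closed (- U)" "closed K" "- U \<inter> K = {}"
    using KU by (auto intro: compact_imp_closed)
  then obtain \<phi> where \<phi>: "cutoff \<phi>" "\<And>x. x \<in> - U \<Longrightarrow> \<phi> x = 0" "\<And>x. x \<in> K \<Longrightarrow> \<phi> x = 1"
    by (rule Urysohn_cutoff[OF cpt]) (rule that)
  define h where "h = mult_bcontfun \<phi> f"
  obtain P\<^sub>1 P\<^sub>2 where P: "P\<^sub>1 \<in> borel_parts UNIV" "osc_le f P\<^sub>1 \<delta>" "P\<^sub>2 \<in> borel_parts UNIV" "osc_le h P\<^sub>2 \<delta>"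
    using fine_borel_partition[OF cpt _ \<open>0 < \<delta>\<close>] by (metis continuous_on_apply_bcontfun)
  have "finite {A, K, U}" "{A, K, U} \<subseteq> sets borel"
    using A KU(1,2) by (auto intro: borel_open borel_closed compact_imp_closed)
  then obtain R where R: "R \<in> borel_parts UNIV" "finer_than R P\<^sub>1" "finer_than R P\<^sub>2"
      "\<And>D T. D \<in> R \<Longrightarrow> T \<in> {A, K, U} \<Longrightarrow> D \<subseteq> T \<or> D \<inter> T = {}"
    by (rule common_refinement[OF P(1,3)]) (rule that)
  have "\<bar>pairing h m - riemann_sum h m R point_of\<bar> \<le> \<delta> * V"
    unfolding V_def using osc_le_finer_than[OF P(4) R(3)] \<open>0 < \<delta>\<close>
    by (intro pairing_riemann_sum[OF cpt m R(1) _ tagged_point_of]) auto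
  moreover have "\<bar>pairing f mA - riemann_sum f mA R point_of\<bar> \<le> \<delta> * VA"
    unfolding VA_def using osc_le_finer_than[OF P(2) R(2)] \<open>0 < \<delta>\<close>
    by (intro pairing_riemann_sum[OF cpt mA R(1) _ tagged_point_of]) auto
  moreover have "\<bar>riemann_sum h m R point_of - riemann_sum f mA R point_of\<bar> \<le> real (card X) * \<eta>\<^sub>0 + \<delta> * V"
  proof -
    have "\<bar>riemann_sum h m R point_of - riemann_sum f mA R point_of\<bar>
        \<le> (\<Sum>D\<in>{D\<in>R. D \<subseteq> U - K}. \<bar>blinfun_apply (m D) (f (point_of D))\<bar>)"
      unfolding h_def mA_def using R(2) \<phi>(2)
      by (intro riemann_sum_cutoff_restr_meas[OF m \<phi>(1,3) _ KU(3,4) R(1) _ R(4)]) (auto simp: finer_than_def)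
    also have "\<dots> \<le> real (card X) * \<eta>\<^sub>0 + \<delta> * V"
    proof (unfold V_def, rule sum_abs_le_net_variation[OF m _ _ _ _ _ X(1), where S = "U - K"])
      show "finite {D\<in>R. D \<subseteq> U - K}" "{D\<in>R. D \<subseteq> U - K} \<subseteq> sets borel"
        "disjoint {D\<in>R. D \<subseteq> U - K}"
        using R(1) by (auto simp: borel_parts_def intro: pairwise_subset)
      show "U - K \<in> sets borel"
        using KU(1,2) by (intro sets.Diff borel_open borel_closed compact_imp_closed)
      show "\<exists>x\<in>X. dist x (f (point_of D)) < \<delta>" for D
        using X(2) rangeI[of f "point_of D"] by (auto simp: subset_iff)
    qed (use KU(5) \<open>0 < \<delta>\<close> in auto)
    finally show ?thesis .
  qed
  moreover have "real (card X) * \<eta>\<^sub>0 \<le> \<eta> / 4" "\<delta> * (2 * V + VA) \<le> \<eta> / 2"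
    using \<open>0 < \<eta>\<close> V by (auto simp: \<eta>\<^sub>0_def \<delta>_def field_simps)
  ultimately have "\<bar>pairing h m - pairing f mA\<bar> \<le> \<eta>"
    by (simp add: algebra_simps)
  then show ?thesis
    using that \<phi>(1) unfolding h_def mA_def by blast
qed

section \<open>WUC series under multiplication by cutoffs\<close>

lemma Baire_ball:
  fixes C :: "nat \<Rightarrow> 'a::complete_space set"
  assumes "\<And>k. closed (C k)" "(\<Union>k. C k) = UNIV"
  obtains k x r where "0 < r" "ball x r \<subseteq> C k"
proof -
  have "\<exists>k. euclidean interior_of (C k) \<noteq> {}"
  proof (rule ccontr)
    assume "\<not> ?thesis"
    moreover have "closedin euclidean (C k)" for k
      using assms(1) closed_closedin by blast
    ultimately have "\<forall>T\<in>range C. closedin euclidean T \<and> euclidean interior_of T = {}"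
      by auto
    then have "euclidean interior_of \<Union>(range C) = {}"
      using Baire_category_alt[of euclidean "range C"]
      by (simp add: completely_metrizable_space_euclidean) fast
    then show False
      using assms(2) by (simp add: interior_of_openin)
  qed
  then obtain k x where "x \<in> euclidean interior_of (C k)"
    by blast
  then obtain T where "open T" "x \<in> T" "T \<subseteq> C k"
    by (auto simp: interior_of_def)
  then obtain r where "0 < r" "ball x r \<subseteq> C k"
    by (meson open_contains_ball subset_trans)
  then show ?thesis
    by (rule that)
qed

lemma weakly_bounded_imp_bounded:
  fixes W :: "'a::real_normed_vector set"
  assumes "\<And>\<psi> :: 'a \<Rightarrow>\<^sub>L real. \<exists>k. \<forall>v\<in>W. \<bar>blinfun_apply \<psi> v\<bar> \<le> k"
  obtains C where "C \<ge> 0" "\<And>\<psi> v. v \<in> W \<Longrightarrow> \<bar>blinfun_apply \<psi> v\<bar> \<le> C * norm \<psi>"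
proof -
  define Cs where "Cs k = {\<psi> :: 'a \<Rightarrow>\<^sub>L real. \<forall>v\<in>W. \<bar>blinfun_apply \<psi> v\<bar> \<le> real k}" for k :: nat
  have "closed (Cs k)" for k
  proof -
    have "Cs k = (\<Inter>v\<in>W. {\<psi>. \<bar>blinfun_apply \<psi> v\<bar> \<le> real k})"
      by (auto simp: Cs_def)
    moreover have "closed {\<psi> :: 'a \<Rightarrow>\<^sub>L real. \<bar>blinfun_apply \<psi> v\<bar> \<le> real k}" for v
      by (intro closed_Collect_le continuous_intros)
    ultimately show ?thesis
      by auto
  qed
  moreover have "\<psi> \<in> (\<Union>k. Cs k)" for \<psi>
  proof -
    obtain k where k: "\<forall>v\<in>W. \<bar>blinfun_apply \<psi> v\<bar> \<le> k"
      using assms by blast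
    obtain n :: nat where "k \<le> real n"
      using real_arch_simple by blast
    then have "\<psi> \<in> Cs n"
      using k unfolding Cs_def by force
    then show ?thesis
      by blast
  qed
  then have "(\<Union>k. Cs k) = UNIV"
    by blast
  ultimately obtain k \<psi>\<^sub>0 r where r: "r > 0" "ball \<psi>\<^sub>0 r \<subseteq> Cs k"
    by (rule Baire_ball)
  have "\<bar>blinfun_apply \<psi> v\<bar> \<le> 4 * real k / r * norm \<psi>" if "v \<in> W" for \<psi> v
  proof (cases "\<psi> = 0")
    case False
    define c where "c = r / (2 * norm \<psi>)"
    have c: "c > 0"
      using False r by (simp add: c_def)
    have "\<psi>\<^sub>0 + c *\<^sub>R \<psi> \<in> Cs k" "\<psi>\<^sub>0 \<in> Cs k"
      using r False by (auto simp: c_def dist_norm intro!: subsetD[OF r(2)])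
    then have "\<bar>blinfun_apply (\<psi>\<^sub>0 + c *\<^sub>R \<psi>) v\<bar> \<le> real k" "\<bar>blinfun_apply \<psi>\<^sub>0 v\<bar> \<le> real k"
      using that by (auto simp: Cs_def)
    moreover have "c * \<bar>blinfun_apply \<psi> v\<bar> = \<bar>blinfun_apply (\<psi>\<^sub>0 + c *\<^sub>R \<psi>) v - blinfun_apply \<psi>\<^sub>0 v\<bar>"
      using c by (simp add: blinfun.add_left blinfun.scaleR_left abs_mult)
    ultimately have "c * \<bar>blinfun_apply \<psi> v\<bar> \<le> 2 * real k"
      by linarith
    then show ?thesis
      using c False r by (simp add: c_def field_simps)
  qed simp
  then show ?thesis
    using r(1) by (intro that[of "4 * real k / r"]) auto
qed

lemma WUC_signed_sums_bounded:
  fixes x :: "nat \<Rightarrow> 'a::real_normed_vector"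
  assumes "WUC x"
  obtains C where "C \<ge> 0" "\<And>\<psi> G s. finite G \<Longrightarrow> (\<forall>n. \<bar>s n\<bar> \<le> 1) \<Longrightarrow>
      \<bar>blinfun_apply \<psi> (\<Sum>n\<in>G. s n *\<^sub>R x n)\<bar> \<le> C * norm \<psi>"
proof -
  define W where "W = {(\<Sum>n\<in>G. s n *\<^sub>R x n) | G s. finite G \<and> (\<forall>n. \<bar>s n\<bar> \<le> (1::real))}"
  have "\<exists>k. \<forall>v\<in>W. \<bar>blinfun_apply \<psi> v\<bar> \<le> k" for \<psi> :: "'a \<Rightarrow>\<^sub>L real"
  proof (intro exI ballI)
    have summable: "summable (\<lambda>n. \<bar>blinfun_apply \<psi> (x n)\<bar>)"
      using assms by (simp add: WUC_def)
    fix v assume "v \<in> W"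
    then obtain G s where v: "v = (\<Sum>n\<in>G. s n *\<^sub>R x n)" "finite G" "\<forall>n. \<bar>s n\<bar> \<le> 1"
      by (auto simp: W_def)
    have "\<bar>blinfun_apply \<psi> v\<bar> \<le> (\<Sum>n\<in>G. \<bar>s n * blinfun_apply \<psi> (x n)\<bar>)"
      by (simp add: v blinfun.sum_right blinfun.scaleR_right sum_abs)
    also have "\<dots> \<le> (\<Sum>n\<in>G. \<bar>blinfun_apply \<psi> (x n)\<bar>)"
      using v(3) by (intro sum_mono) (simp add: abs_mult mult_left_le_one_le)
    also have "\<dots> \<le> (\<Sum>n. \<bar>blinfun_apply \<psi> (x n)\<bar>)"
      using summable v(2) by (intro sum_le_suminf) auto
    finally show "\<bar>blinfun_apply \<psi> v\<bar> \<le> (\<Sum>n. \<bar>blinfun_apply \<psi> (x n)\<bar>)" .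
  qed
  then obtain C where "C \<ge> 0" "\<And>\<psi> v. v \<in> W \<Longrightarrow> \<bar>blinfun_apply \<psi> v\<bar> \<le> C * norm \<psi>"
    by (rule weakly_bounded_imp_bounded) blast
  then show ?thesis
    by (intro that[of C]) (auto simp: W_def)
qed

lemma blinfun_almost_norming:
  fixes \<psi> :: "'a::real_normed_vector \<Rightarrow>\<^sub>L real"
  assumes "0 < \<epsilon>"
  obtains g where "norm g \<le> 1" "norm \<psi> - \<epsilon> \<le> blinfun_apply \<psi> g"
proof -
  have "\<exists>g. norm g \<le> 1 \<and> norm \<psi> - \<epsilon> \<le> blinfun_apply \<psi> g"
  proof (rule ccontr)
    assume "\<not> ?thesis"
    then have less: "blinfun_apply \<psi> g < norm \<psi> - \<epsilon>" if "norm g \<le> 1" for g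
      using that by force
    have "norm \<psi> \<le> norm \<psi> - \<epsilon>"
    proof (rule norm_blinfun_bound)
      show "0 \<le> norm \<psi> - \<epsilon>"
        using less[of 0] by simp
      fix x :: 'a
      show "norm (blinfun_apply \<psi> x) \<le> (norm \<psi> - \<epsilon>) * norm x"
      proof (cases "x = 0")
        case False
        define g where "g = x /\<^sub>R norm x"
        have "norm g \<le> 1" "norm (- g) \<le> 1"
          using False by (simp_all add: g_def)
        then have "\<bar>blinfun_apply \<psi> g\<bar> \<le> norm \<psi> - \<epsilon>"
          using less[of g] less[of "- g"] by (simp add: blinfun.minus_right abs_le_iff)
        moreover have "blinfun_apply \<psi> x = norm x * blinfun_apply \<psi> g"
          using False by (simp add: g_def blinfun.scaleR_right)
        ultimately show ?thesis
          by (simp add: abs_mult mult.commute mult_left_mono)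
      qed simp
    qed
    then show False
      using assms by simp
  qed
  then show ?thesis
    using that by blast
qed

lemma norm_blinfun_compose_cutoff_le:
  fixes \<psi> :: "('w::topological_space \<Rightarrow>\<^sub>C 'e::real_normed_vector) \<Rightarrow>\<^sub>L real"
  assumes \<phi>: "cutoff \<phi>"
  shows "norm (\<psi> o\<^sub>L mult_blinfun \<phi>) + norm (\<psi> o\<^sub>L mult_blinfun (\<lambda>t. 1 - \<phi> t)) \<le> norm \<psi>"
proof (rule field_le_epsilon)
  fix \<epsilon> :: real assume "0 < \<epsilon>"
  then have "0 < \<epsilon> / 2"
    by simp
  have \<phi>': "cutoff (\<lambda>t. 1 - \<phi> t)"
    by (rule cutoff_one_minus[OF \<phi>])
  obtain g\<^sub>1 where g\<^sub>1: "norm g\<^sub>1 \<le> 1"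
      "norm (\<psi> o\<^sub>L mult_blinfun \<phi>) - \<epsilon> / 2 \<le> blinfun_apply (\<psi> o\<^sub>L mult_blinfun \<phi>) g\<^sub>1"
    by (rule blinfun_almost_norming[OF \<open>0 < \<epsilon> / 2\<close>])
  obtain g\<^sub>2 where g\<^sub>2: "norm g\<^sub>2 \<le> 1"
      "norm (\<psi> o\<^sub>L mult_blinfun (\<lambda>t. 1 - \<phi> t)) - \<epsilon> / 2
        \<le> blinfun_apply (\<psi> o\<^sub>L mult_blinfun (\<lambda>t. 1 - \<phi> t)) g\<^sub>2"
    by (rule blinfun_almost_norming[OF \<open>0 < \<epsilon> / 2\<close>])
  define h where "h = mult_bcontfun \<phi> g\<^sub>1 + mult_bcontfun (\<lambda>t. 1 - \<phi> t) g\<^sub>2"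
  have "norm h \<le> 1"
  proof (rule norm_bound)
    fix x
    have "norm (g\<^sub>1 x) \<le> 1" "norm (g\<^sub>2 x) \<le> 1" "0 \<le> \<phi> x" "\<phi> x \<le> 1"
      using norm_bounded[of g\<^sub>1 x] norm_bounded[of g\<^sub>2 x] g\<^sub>1(1) g\<^sub>2(1) \<phi> by (auto simp: cutoff_def)
    then have "norm (\<phi> x *\<^sub>R g\<^sub>1 x + (1 - \<phi> x) *\<^sub>R g\<^sub>2 x) \<le> \<phi> x * 1 + (1 - \<phi> x) * 1"
      by (intro norm_triangle_le add_mono) (simp_all add: mult_left_le)
    then show "norm (h x) \<le> 1"
      by (simp add: h_def apply_mult_bcontfun[OF \<phi>] apply_mult_bcontfun[OF \<phi>'])
  qed
  have "blinfun_apply \<psi> h \<le> norm \<psi> * norm h"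
    by (metis abs_le_D1 norm_blinfun real_norm_def)
  also have "\<dots> \<le> norm \<psi>"
    using \<open>norm h \<le> 1\<close> by (simp add: mult_left_le)
  finally have "blinfun_apply \<psi> h \<le> norm \<psi>" .
  moreover have "blinfun_apply \<psi> h
      = blinfun_apply (\<psi> o\<^sub>L mult_blinfun \<phi>) g\<^sub>1 + blinfun_apply (\<psi> o\<^sub>L mult_blinfun (\<lambda>t. 1 - \<phi> t)) g\<^sub>2"
    by (simp add: h_def blinfun_apply_mult_blinfun[OF \<phi>] blinfun_apply_mult_blinfun[OF \<phi>'] blinfun.add_right)
  ultimately show "norm (\<psi> o\<^sub>L mult_blinfun \<phi>) + norm (\<psi> o\<^sub>L mult_blinfun (\<lambda>t. 1 - \<phi> t)) \<le> norm \<psi> + \<epsilon>"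
    using g\<^sub>1(2) g\<^sub>2(2) by linarith
qed

text \<open>Induction on the terms already multiplied by their cutoff: with \<open>\<phi> = \<phi>\<^sub>a\<close> the sum is
  \<open>M\<^sub>\<phi> (Y + s\<^sub>a x\<^sub>a) + M\<^bsub>1-\<phi>\<^esub> Y\<close>, and the two pieces are estimated under \<open>\<psi> \<circ> M\<^sub>\<phi>\<close> and
  \<open>\<psi> \<circ> M\<^bsub>1-\<phi>\<^esub>\<close>, whose norms add up to at most \<open>\<parallel>\<psi>\<parallel>\<close>.\<close>

lemma cutoff_signed_sums_bounded:
  fixes x :: "nat \<Rightarrow> ('w::topological_space \<Rightarrow>\<^sub>C 'e::real_normed_vector)"
  assumes "C \<ge> 0"
    and bound: "\<And>\<psi> G s. finite G \<Longrightarrow> (\<forall>n. \<bar>s n\<bar> \<le> 1) \<Longrightarrow>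
      \<bar>blinfun_apply \<psi> (\<Sum>n\<in>G. s n *\<^sub>R x n)\<bar> \<le> C * norm \<psi>"
    and \<phi>: "\<And>n. cutoff (\<phi> n)" and "finite F" "finite G" "G \<inter> F = {}" "\<forall>n. \<bar>s n\<bar> \<le> 1"
  shows "\<bar>blinfun_apply \<psi> ((\<Sum>n\<in>F. mult_bcontfun (\<phi> n) (s n *\<^sub>R x n)) + (\<Sum>n\<in>G. s n *\<^sub>R x n))\<bar>
    \<le> C * norm \<psi>"
  using assms(4-6)
proof (induction F arbitrary: G \<psi> rule: finite_induct)
  case empty
  then show ?case
    using bound assms(7) by simp
next
  case (insert a F)
  define Y where "Y = (\<Sum>n\<in>F. mult_bcontfun (\<phi> n) (s n *\<^sub>R x n)) + (\<Sum>n\<in>G. s n *\<^sub>R x n)"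
  define \<psi>\<^sub>1 where "\<psi>\<^sub>1 = \<psi> o\<^sub>L mult_blinfun (\<phi> a)"
  define \<psi>\<^sub>2 where "\<psi>\<^sub>2 = \<psi> o\<^sub>L mult_blinfun (\<lambda>t. 1 - \<phi> a t)"
  have split: "(\<Sum>n\<in>insert a F. mult_bcontfun (\<phi> n) (s n *\<^sub>R x n)) + (\<Sum>n\<in>G. s n *\<^sub>R x n)
      = mult_bcontfun (\<phi> a) (Y + s a *\<^sub>R x a) + mult_bcontfun (\<lambda>t. 1 - \<phi> a t) Y"
    using insert.hyps by (intro bcontfun_eqI)
      (simp add: Y_def apply_mult_bcontfun[OF \<phi>] apply_mult_bcontfun[OF cutoff_one_minus[OF \<phi>]] algebra_simps)
  have Y_shift: "Y + s a *\<^sub>R x a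
      = (\<Sum>n\<in>F. mult_bcontfun (\<phi> n) (s n *\<^sub>R x n)) + (\<Sum>n\<in>insert a G. s n *\<^sub>R x n)"
    using insert.prems by (auto simp: Y_def algebra_simps)
  have "\<bar>blinfun_apply \<psi>\<^sub>1 (Y + s a *\<^sub>R x a)\<bar> \<le> C * norm \<psi>\<^sub>1"
    unfolding Y_shift using insert.prems insert.hyps(2) by (intro insert.IH) auto
  moreover have "\<bar>blinfun_apply \<psi>\<^sub>2 Y\<bar> \<le> C * norm \<psi>\<^sub>2"
    unfolding Y_def using insert.prems by (intro insert.IH) auto
  moreover have "C * (norm \<psi>\<^sub>1 + norm \<psi>\<^sub>2) \<le> C * norm \<psi>"
    unfolding \<psi>\<^sub>1_def \<psi>\<^sub>2_def using norm_blinfun_compose_cutoff_le[OF \<phi>] \<open>C \<ge> 0\<close> by (rule mult_left_mono)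
  moreover have "blinfun_apply \<psi> (mult_bcontfun (\<phi> a) (Y + s a *\<^sub>R x a) + mult_bcontfun (\<lambda>t. 1 - \<phi> a t) Y)
      = blinfun_apply \<psi>\<^sub>1 (Y + s a *\<^sub>R x a) + blinfun_apply \<psi>\<^sub>2 Y"
    by (simp add: \<psi>\<^sub>1_def \<psi>\<^sub>2_def blinfun_apply_mult_blinfun[OF \<phi>]
        blinfun_apply_mult_blinfun[OF cutoff_one_minus[OF \<phi>]] blinfun.add_right mult_bcontfun_add[OF \<phi>])
  ultimately show ?case
    unfolding split by (simp add: algebra_simps)
qed

lemma WUC_mult_cutoff:
  fixes x :: "nat \<Rightarrow> ('w::topological_space \<Rightarrow>\<^sub>C 'e::real_normed_vector)"
  assumes "WUC x" and \<phi>: "\<And>n. cutoff (\<phi> n)"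
  shows "WUC (\<lambda>n. mult_bcontfun (\<phi> n) (x n))"
  unfolding WUC_def
proof
  fix \<psi> :: "('w \<Rightarrow>\<^sub>C 'e) \<Rightarrow>\<^sub>L real"
  obtain C where C: "C \<ge> 0" "\<And>\<psi> G s. finite G \<Longrightarrow> (\<forall>n. \<bar>s n\<bar> \<le> 1) \<Longrightarrow>
      \<bar>blinfun_apply \<psi> (\<Sum>n\<in>G. s n *\<^sub>R x n)\<bar> \<le> C * norm \<psi>"
    by (rule WUC_signed_sums_bounded[OF assms(1)]) blast
  define s where "s n = sgn (blinfun_apply \<psi> (mult_bcontfun (\<phi> n) (x n)))" for n
  show "summable (\<lambda>n. \<bar>blinfun_apply \<psi> (mult_bcontfun (\<phi> n) (x n))\<bar>)"
  proof (rule summableI_nonneg_bounded)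
    fix N
    have "(\<Sum>i<N. \<bar>blinfun_apply \<psi> (mult_bcontfun (\<phi> i) (x i))\<bar>)
        = blinfun_apply \<psi> ((\<Sum>n\<in>{..<N}. mult_bcontfun (\<phi> n) (s n *\<^sub>R x n)) + (\<Sum>n\<in>{}. s n *\<^sub>R x n))"
      by (simp add: blinfun.sum_right mult_bcontfun_scaleR[OF \<phi>] blinfun.scaleR_right s_def
          abs_sgn mult.commute)
    also have "\<dots> \<le> \<bar>\<dots>\<bar>"
      by (rule abs_ge_self)
    also have "\<dots> \<le> C * norm \<psi>"
      by (rule cutoff_signed_sums_bounded[OF C \<phi>]) (auto simp: s_def abs_sgn_eq)
    finally show "(\<Sum>i<N. \<bar>blinfun_apply \<psi> (mult_bcontfun (\<phi> i) (x i))\<bar>) \<le> C * norm \<psi>" .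
  qed simp
qed

definition cutoff_approximable ::
    "('w::topological_space set \<Rightarrow> ('e::real_normed_vector \<Rightarrow>\<^sub>L real)) set \<Rightarrow>
      (('w set \<Rightarrow> ('e \<Rightarrow>\<^sub>L real)) \<Rightarrow> ('w set \<Rightarrow> ('e \<Rightarrow>\<^sub>L real))) \<Rightarrow> bool" where
  "cutoff_approximable H T \<longleftrightarrow> (\<forall>g m \<eta>. m \<in> H \<longrightarrow> 0 < \<eta> \<longrightarrow>
      (\<exists>\<phi>. cutoff \<phi> \<and> \<bar>pairing (mult_bcontfun \<phi> g) m - pairing g (T m)\<bar> \<le> \<eta>))"

lemma cutoff_witnesses:
  fixes H :: "('w::topological_space set \<Rightarrow> ('e::real_normed_vector \<Rightarrow>\<^sub>L real)) set"
    and T :: "('w set \<Rightarrow> ('e \<Rightarrow>\<^sub>L real)) \<Rightarrow> ('w set \<Rightarrow> ('e \<Rightarrow>\<^sub>L real))"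
  assumes "cutoff_approximable H T" and "0 < \<eta>"
  obtains \<phi> m' where "\<And>n. cutoff (\<phi> n)"
    "\<And>n m. m \<in> H \<Longrightarrow> \<epsilon> < \<bar>pairing (f n) (T m)\<bar> \<Longrightarrow> m' n \<in> H \<and> \<epsilon> < \<bar>pairing (f n) (T (m' n))\<bar> \<and>
      \<bar>pairing (mult_bcontfun (\<phi> n) (f n)) (m' n) - pairing (f n) (T (m' n))\<bar> \<le> \<eta>"
proof -
  have "\<forall>n. \<exists>p. cutoff (fst p) \<and> (\<forall>m\<in>H. \<epsilon> < \<bar>pairing (f n) (T m)\<bar> \<longrightarrow> snd p \<in> H \<and>
      \<epsilon> < \<bar>pairing (f n) (T (snd p))\<bar> \<and>
      \<bar>pairing (mult_bcontfun (fst p) (f n)) (snd p) - pairing (f n) (T (snd p))\<bar> \<le> \<eta>)"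
    (is "\<forall>n. \<exists>p. ?witness n p")
  proof
    fix n
    show "\<exists>p. ?witness n p"
    proof (cases "\<exists>m\<in>H. \<epsilon> < \<bar>pairing (f n) (T m)\<bar>")
      case True
      then obtain m where m: "m \<in> H" "\<epsilon> < \<bar>pairing (f n) (T m)\<bar>"
        by blast
      obtain \<phi> where "cutoff \<phi>" "\<bar>pairing (mult_bcontfun \<phi> (f n)) m - pairing (f n) (T m)\<bar> \<le> \<eta>"
        using assms m(1) unfolding cutoff_approximable_def by blast
      then have "?witness n (\<phi>, m)"
        using m by simp
      then show ?thesis
        by blast
    next
      case False
      then have "?witness n (\<lambda>_. 0, m)" for m
        using cutoff_zero by auto
      then show ?thesis
        by blast
    qed
  qed
  from choice[OF this] obtain p where p: "\<And>n. ?witness n (p n)"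
    by blast
  show ?thesis
  proof (rule that[of "\<lambda>n. fst (p n)" "\<lambda>n. snd (p n)"])
    show "cutoff (fst (p n))" for n
      using p[of n] by blast
    show "snd (p n) \<in> H \<and> \<epsilon> < \<bar>pairing (f n) (T (snd (p n)))\<bar> \<and>
        \<bar>pairing (mult_bcontfun (fst (p n)) (f n)) (snd (p n)) - pairing (f n) (T (snd (p n)))\<bar> \<le> \<eta>"
      if "m \<in> H" "\<epsilon> < \<bar>pairing (f n) (T m)\<bar>" for n m
      using p[of n] that by blast
  qed
qed

lemma V_condition_transfer:
  fixes H :: "('w::topological_space set \<Rightarrow> ('e::real_normed_vector \<Rightarrow>\<^sub>L real)) set"
    and T :: "('w set \<Rightarrow> ('e \<Rightarrow>\<^sub>L real)) \<Rightarrow> ('w set \<Rightarrow> ('e \<Rightarrow>\<^sub>L real))"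
  assumes V: "V_subset H"
    and approx: "cutoff_approximable H T" and f: "WUC f" and "0 < \<epsilon>"
  shows "\<exists>N. \<forall>n\<ge>N. \<forall>m\<in>H. \<bar>pairing (f n) (T m)\<bar> \<le> \<epsilon>"
proof -
  have "0 < \<epsilon> / 2"
    using \<open>0 < \<epsilon>\<close> by simp
  obtain \<phi> m' where \<phi>: "\<And>n. cutoff (\<phi> n)"
    and m': "\<And>n m. m \<in> H \<Longrightarrow> \<epsilon> < \<bar>pairing (f n) (T m)\<bar> \<Longrightarrow> m' n \<in> H \<and>
      \<epsilon> < \<bar>pairing (f n) (T (m' n))\<bar> \<and>
      \<bar>pairing (mult_bcontfun (\<phi> n) (f n)) (m' n) - pairing (f n) (T (m' n))\<bar> \<le> \<epsilon> / 2"
    by (rule cutoff_witnesses[OF approx \<open>0 < \<epsilon> / 2\<close>]) (rule that)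
  have "WUC (\<lambda>n. mult_bcontfun (\<phi> n) (f n))"
    by (rule WUC_mult_cutoff[OF f \<phi>])
  then obtain N where N: "\<forall>n\<ge>N. \<forall>m\<in>H. \<bar>pairing (mult_bcontfun (\<phi> n) (f n)) m\<bar> \<le> \<epsilon> / 2"
    using V \<open>0 < \<epsilon> / 2\<close> unfolding V_subset_def by blast
  have "\<bar>pairing (f n) (T m)\<bar> \<le> \<epsilon>" if "n \<ge> N" "m \<in> H" for n m
  proof (rule ccontr)
    assume "\<not> ?thesis"
    then have "m' n \<in> H" "\<epsilon> < \<bar>pairing (f n) (T (m' n))\<bar>"
      "\<bar>pairing (mult_bcontfun (\<phi> n) (f n)) (m' n) - pairing (f n) (T (m' n))\<bar> \<le> \<epsilon> / 2"
      using m'[OF that(2)] by simp_all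
    moreover have "\<bar>pairing (mult_bcontfun (\<phi> n) (f n)) (m' n)\<bar> \<le> \<epsilon> / 2"
      using N that(1) \<open>m' n \<in> H\<close> by blast
    ultimately show False
      by linarith
  qed
  then show ?thesis
    by blast
qed

theorem proposition3:
  fixes H :: "('w::t2_space set \<Rightarrow> ('e::banach \<Rightarrow>\<^sub>L real)) set"
    and A :: "('w set \<Rightarrow> ('e \<Rightarrow>\<^sub>L real)) \<Rightarrow> 'w set"
  assumes "compact (UNIV :: 'w set)"
    and "V_subset H"
    and "\<And>m. m \<in> H \<Longrightarrow> A m \<in> sets borel"
  shows "V_subset ((\<lambda>m. restr_meas m (A m)) ` H)"
proof -
  have H: "H \<subseteq> Mspace"
    using assms(2) by (simp add: V_subset_def)
  have approx: "cutoff_approximable H (\<lambda>m. restr_meas m (A m))"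
    unfolding cutoff_approximable_def
  proof (intro allI impI)
    fix g m and \<eta> :: real
    assume "m \<in> H" "0 < \<eta>"
    then have "m \<in> Mspace"
      using H by blast
    then obtain \<phi> where "cutoff \<phi>" "\<bar>pairing (mult_bcontfun \<phi> g) m - pairing g (restr_meas m (A m))\<bar> \<le> \<eta>"
      by (rule pairing_restr_meas_approx[OF assms(1) _ assms(3)[OF \<open>m \<in> H\<close>] \<open>0 < \<eta>\<close>]) (rule that)
    then show "\<exists>\<phi>. cutoff \<phi> \<and> \<bar>pairing (mult_bcontfun \<phi> g) m - pairing g (restr_meas m (A m))\<bar> \<le> \<eta>"
      by blast
  qed
  show ?thesis
    unfolding V_subset_def
  proof (intro conjI allI impI)
    show "(\<lambda>m. restr_meas m (A m)) ` H \<subseteq> Mspace"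
      using H assms(3) restr_meas_in_Mspace by blast
  next
    fix f :: "nat \<Rightarrow> ('w \<Rightarrow>\<^sub>C 'e)" and \<epsilon> :: real
    assume "WUC f" "0 < \<epsilon>"
    then have "\<exists>N. \<forall>n\<ge>N. \<forall>m\<in>H. \<bar>pairing (f n) (restr_meas m (A m))\<bar> \<le> \<epsilon>"
      by (rule V_condition_transfer[OF assms(2) approx])
    then show "\<exists>N. \<forall>n\<ge>N. \<forall>m\<in>(\<lambda>m. restr_meas m (A m)) ` H. \<bar>pairing (f n) m\<bar> \<le> \<epsilon>"
      by auto
  qed
qed

end
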